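(* Let $A$ be a ${C^*}$-algebra and $a,b\in A_+$ with $b\ne0$. Suppose that for every continuous $f\colon[0,\|b\|]\to[0,1]$ with $f(0)=0$ and $f(\|b\|)\ne0$ we have $a\precsim f(b)$. Then there is a sequence $(z_n)$ in $A$ with $z_n^*bz_n\to a$ and $\|z_n\|=(\|a\|/\|b\|)^{1/2}$ for all $n$.
   Context: For positive $a,b$ in a ${C^*}$-algebra $A$, $a\precsim b$ (Cuntz subequivalence) means there is a sequence $(x_n)$ in $A$ with $x_n^*bx_n\to a$. *)

theory Defs
  imports "HOL-Analysis.Analysis" "HOL-Computational_Algebra.Polynomial"
begin

text \<open>(Possibly non-unital) C*-algebras: complex Banach *-algebras satisfying the
C*-identity.\<close>

class cstar_algebra = real_normed_algebra + banach +
  fixes scaleC :: "complex \<Rightarrow> 'a \<Rightarrow> 'a"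
    and adj :: "'a \<Rightarrow> 'a"
  assumes scaleC_add_right: "scaleC c (x + y) = scaleC c x + scaleC c y"
    and scaleC_add_left: "scaleC (c + d) x = scaleC c x + scaleC d x"
    and scaleC_scaleC: "scaleC c (scaleC d x) = scaleC (c * d) x"
    and scaleC_one: "scaleC 1 x = x"
    and scaleR_scaleC: "scaleR r x = scaleC (of_real r) x"
    and norm_scaleC: "norm (scaleC c x) = cmod c * norm x"
    and mult_scaleC_left: "scaleC c x * y = scaleC c (x * y)"
    and mult_scaleC_right: "x * scaleC c y = scaleC c (x * y)"
    and adj_adj: "adj (adj x) = x"
    and adj_add: "adj (x + y) = adj x + adj y"
    and adj_scaleC: "adj (scaleC c x) = scaleC (cnj c) (adj x)"
    and adj_mult: "adj (x * y) = adj y * adj x"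
    and cstar_identity: "norm (adj x * x) = norm x ^ 2"

text \<open>Quasi-invertibility (x is quasi-invertible iff 1 - x is invertible in the unitization).\<close>
definition quasi_invertible :: "'a::cstar_algebra \<Rightarrow> bool" where
  "quasi_invertible x \<longleftrightarrow> (\<exists>y. x + y - x * y = 0 \<and> x + y - y * x = 0)"

text \<open>Spectrum (taken in the unitization): 0 is always included; for \<lambda> \<noteq> 0,
\<lambda> \<in> \<sigma>(a) iff \<lambda> - a is not invertible iff a/\<lambda> is not quasi-invertible.\<close>
definition spectrum :: "'a::cstar_algebra \<Rightarrow> complex set" where
  "spectrum a = {0} \<union> {l. l \<noteq> 0 \<and> \<not> quasi_invertible (scaleC (1 / l) a)}"

definition positive :: "'a::cstar_algebra \<Rightarrow> bool" where
  "positive a \<longleftrightarrow> adj a = a \<and> spectrum a \<subseteq> complex_of_real ` {0..}"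

definition cuntz_below :: "'a::cstar_algebra \<Rightarrow> 'a \<Rightarrow> bool" where
  "cuntz_below a b \<longleftrightarrow> (\<exists>x :: nat \<Rightarrow> 'a. (\<lambda>n. adj (x n) * b * x n) \<longlonglongrightarrow> a)"

text \<open>cpow x n = x^(n+1) (no unit needed).\<close>
fun cpow :: "'a::cstar_algebra \<Rightarrow> nat \<Rightarrow> 'a" where
  "cpow x 0 = x"
| "cpow x (Suc n) = x * cpow x n"

text \<open>Evaluation of a real polynomial without constant term at an element.\<close>
definition peval :: "real poly \<Rightarrow> 'a::cstar_algebra \<Rightarrow> 'a" where
  "peval p x = (\<Sum>i<degree p. coeff p (Suc i) *\<^sub>R cpow x i)"

text \<open>Continuous functional calculus for a positive b and continuous f on [0,\<parallel>b\<parallel>]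
with f(0)=0: f(b) is the limit of p_n(b) for polynomials p_n with p_n(0)=0 converging
uniformly to f on [0,\<parallel>b\<parallel>] (which contains the spectrum of b).\<close>
definition fcalc :: "(real \<Rightarrow> real) \<Rightarrow> 'a::cstar_algebra \<Rightarrow> 'a" where
  "fcalc f b = (THE c. \<forall>p :: nat \<Rightarrow> real poly.
      (\<forall>n. poly (p n) 0 = 0) \<and> uniform_limit {0..norm b} (\<lambda>n x. poly (p n) x) f sequentially
      \<longrightarrow> (\<lambda>n. peval (p n) b) \<longlonglongrightarrow> c)"

end

theory Submission
  imports Defs "HOL-Computational_Algebra.Fundamental_Theorem_Algebra"
begin

text \<open>Fix \<open>0 < d < \<parallel>b\<parallel>\<close> and a continuous ramp \<open>f\<close> vanishing on \<open>[0, d]\<close> with \<open>f(\<parallel>b\<parallel>) = 1\<close>.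
  On the spectrum of \<open>b\<close> we can write \<open>f(t) = g(t)\<^sup>2 t\<close> with \<open>g = r \<cdot> \<surd>f\<close>, where \<open>r(t) = t\<^sup>-\<^sup>1\<^sup>/\<^sup>2\<close> on
  the support of \<open>f\<close> and \<open>|r| \<le> d\<^sup>-\<^sup>1\<^sup>/\<^sup>2\<close> everywhere. If \<open>x\<^sup>* f(b) x\<close> is close to \<open>a\<close>, then
  \<open>z = g(b) x\<close> satisfies \<open>z\<^sup>* b z = x\<^sup>* f(b) x\<close> and, by the C*-identity applied to \<open>\<surd>f(b) x\<close>,
  \<open>d \<parallel>z\<parallel>\<^sup>2 \<le> \<parallel>x\<^sup>* f(b) x\<parallel>\<close>. Together with the trivial \<open>\<parallel>z\<^sup>* b z\<parallel> \<le> \<parallel>b\<parallel> \<parallel>z\<parallel>\<^sup>2\<close>, letting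
  \<open>d \<rightarrow> \<parallel>b\<parallel>\<close> gives \<open>z\<^sub>n\<^sup>* b z\<^sub>n \<rightarrow> a\<close> with \<open>\<parallel>z\<^sub>n\<parallel>\<^sup>2 \<rightarrow> \<parallel>a\<parallel> / \<parallel>b\<parallel>\<close>, and rescaling fixes the norms.

  The functional calculus is a limit of polynomials, so everything rests on
  \<open>\<parallel>q(b)\<parallel> \<le> sup\<^bsub>[0,\<parallel>b\<parallel>]\<^esub> |q|\<close>. This follows from a spectral mapping argument and the bound of
  the norm of a self-adjoint element by its spectral radius, which we prove without complex
  analysis by averaging the resolvent over roots of unity.\<close>

section \<open>Elementary facts about C*-algebras\<close>

lemma scaleC_zero_right [simp]: "scaleC c (0::'a::cstar_algebra) = 0"
proof -
  have "scaleC c (0::'a) = scaleC c 0 + scaleC c 0" by (metis add.right_neutral scaleC_add_right)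
  thus ?thesis by simp
qed

lemma scaleC_zero_left [simp]: "scaleC 0 (x::'a::cstar_algebra) = 0"
proof -
  have "scaleC 0 x = scaleC 0 x + scaleC 0 x" by (metis add.right_neutral scaleC_add_left)
  thus ?thesis by simp
qed

lemma scaleC_minus_right: "scaleC c (- x::'a::cstar_algebra) = - scaleC c x"
proof -
  have "scaleC c (-x) + scaleC c x = 0" by (simp add: scaleC_add_right[symmetric])
  thus ?thesis by (simp add: eq_neg_iff_add_eq_0)
qed

lemma scaleC_minus_left: "scaleC (- c) (x::'a::cstar_algebra) = - scaleC c x"
proof -
  have "scaleC (-c) x + scaleC c x = 0" by (simp add: scaleC_add_left[symmetric])
  thus ?thesis by (simp add: eq_neg_iff_add_eq_0)
qed

lemma scaleC_diff_right: "scaleC c (x - y::'a::cstar_algebra) = scaleC c x - scaleC c y"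
  by (simp only: diff_conv_add_uminus scaleC_add_right scaleC_minus_right)

lemma scaleC_diff_left: "scaleC (c - d) (x::'a::cstar_algebra) = scaleC c x - scaleC d x"
  by (simp only: diff_conv_add_uminus scaleC_add_left scaleC_minus_left)

lemma adj_zero [simp]: "adj (0::'a::cstar_algebra) = 0"
proof -
  have "adj (0::'a) = adj 0 + adj 0" by (simp add: adj_add[symmetric])
  thus ?thesis by simp
qed

lemma adj_minus: "adj (- x::'a::cstar_algebra) = - adj x"
proof -
  have "adj (-x) + adj x = 0" by (simp add: adj_add[symmetric])
  thus ?thesis by (simp add: eq_neg_iff_add_eq_0)
qed

lemma adj_diff: "adj (x - y::'a::cstar_algebra) = adj x - adj y"
  by (simp only: diff_conv_add_uminus adj_add adj_minus)

lemma adj_scaleR: "adj (r *\<^sub>R x::'a::cstar_algebra) = r *\<^sub>R adj x"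
  by (simp add: scaleR_scaleC adj_scaleC)

lemma adj_sum: "adj (sum f A) = (\<Sum>i\<in>A. adj (f i::'a::cstar_algebra))"
  by (induction A rule: infinite_finite_induct) (auto simp: adj_add)

lemma norm_le_norm_adj: "norm (x::'a::cstar_algebra) \<le> norm (adj x)"
proof (cases "x = 0")
  case False
  have "norm x ^ 2 \<le> norm (adj x) * norm x"
    using norm_mult_ineq[of "adj x" x] by (simp add: cstar_identity)
  then show ?thesis using False by (simp add: power2_eq_square)
qed simp

lemma norm_adj [simp]: "norm (adj x::'a::cstar_algebra) = norm x"
  using norm_le_norm_adj[of x] norm_le_norm_adj[of "adj x"] by (simp add: adj_adj)

lemma tendsto_adj: "X \<longlonglongrightarrow> L \<Longrightarrow> (\<lambda>n. adj (X n)) \<longlonglongrightarrow> adj (L::'a::cstar_algebra)"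
  by (rule LIM_zero_cancel, rule tendsto_norm_zero_cancel)
     (simp add: adj_diff[symmetric] tendsto_norm_zero LIM_zero)

lemma norm_mult_self_selfadj: "adj x = x \<Longrightarrow> norm (x * x::'a::cstar_algebra) = norm x ^ 2"
  using cstar_identity[of x] by simp

lemma cpow_Suc_right: "cpow x (Suc n) = cpow x n * (x::'a::cstar_algebra)"
  by (induction n) (simp_all add: mult.assoc[symmetric])

lemma cpow_add: "cpow x (Suc (m + n)) = cpow x m * cpow (x::'a::cstar_algebra) n"
  by (induction m) (simp_all add: mult.assoc)

lemma adj_cpow: "adj x = x \<Longrightarrow> adj (cpow x n) = cpow (x::'a::cstar_algebra) n"
  by (induction n) (simp_all add: adj_mult cpow_Suc_right[symmetric])

lemma norm_cpow_le: "norm (cpow x n) \<le> norm (x::'a::cstar_algebra) ^ Suc n"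
proof (induction n)
  case (Suc n)
  have "norm (cpow x (Suc n)) \<le> norm x * norm (cpow x n)" by (simp add: norm_mult_ineq)
  also have "\<dots> \<le> norm x * norm x ^ Suc n" using Suc by (simp add: mult_left_mono)
  finally show ?case by simp
qed simp

lemma norm_cpow_selfadj_pow2:
  assumes "adj x = x"
  shows "norm (cpow x (2^k - 1)) = norm (x::'a::cstar_algebra) ^ (2^k)"
proof (induction k)
  case (Suc k)
  have e: "(2::nat)^Suc k - 1 = Suc ((2^k - 1) + (2^k - 1))"
    by (cases "(2::nat)^k") simp_all
  have "norm (cpow x (2^Suc k - 1)) = norm (cpow x (2^k - 1) * cpow x (2^k - 1))"
    by (simp only: e cpow_add)
  also have "\<dots> = norm (cpow x (2^k - 1)) ^ 2"
    using assms by (simp add: norm_mult_self_selfadj adj_cpow)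
  also have "\<dots> = (norm x ^ 2^k) ^ 2" by (simp only: Suc.IH)
  also have "\<dots> = norm x ^ (2^Suc k)" by (simp add: power_mult[symmetric] mult.commute)
  finally show ?case .
qed simp

lemma cstar_compression_bound:
  fixes b :: "'a::cstar_algebra"
  assumes "adj G = G" "adj M = M" "G * b * G = F" "M * M = F" "G = R * M"
  shows "adj (G * x) * b * (G * x) = adj x * F * x"
    and "norm (G * x) ^ 2 \<le> norm R ^ 2 * norm (adj x * F * x)"
proof -
  have "adj (G * x) * b * (G * x) = adj x * (G * b * G) * x"
    using assms(1) by (simp add: adj_mult mult.assoc)
  thus "adj (G * x) * b * (G * x) = adj x * F * x" using assms(3) by simp
  have "adj (M * x) * (M * x) = adj x * (M * M) * x"
    using assms(2) by (simp add: adj_mult mult.assoc)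
  hence "norm (M * x) ^ 2 = norm (adj x * F * x)"
    using assms(4) cstar_identity[of "M * x"] by simp
  moreover have "norm (G * x) \<le> norm R * norm (M * x)"
    using assms norm_mult_ineq[of R "M * x"] by (simp add: mult.assoc)
  ultimately show "norm (G * x) ^ 2 \<le> norm R ^ 2 * norm (adj x * F * x)"
    by (metis norm_ge_zero power_mono power_mult_distrib)
qed

section \<open>The unitization\<close>

datatype 'a unitization = Unitization (scalar_part: complex) (alg_part: 'a)

instantiation unitization :: (cstar_algebra) ring_1
begin
definition "0 = Unitization 0 0"
definition "1 = Unitization 1 0"
definition "u + v = Unitization (scalar_part u + scalar_part v) (alg_part u + alg_part v)"
definition "- u = Unitization (- scalar_part u) (- alg_part u)"
definition "u - v = Unitization (scalar_part u - scalar_part v) (alg_part u - alg_part v)"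
definition "u * v = Unitization (scalar_part u * scalar_part v)
  (scaleC (scalar_part u) (alg_part v) + scaleC (scalar_part v) (alg_part u)
    + alg_part u * alg_part v)"
instance
proof
  fix a b c :: "'a unitization"
  show "a * b * c = a * (b * c)"
    by (simp add: times_unitization_def scaleC_add_right scaleC_scaleC mult_scaleC_left
        mult_scaleC_right distrib_left distrib_right mult.assoc algebra_simps)
  show "1 * a = a" "a * 1 = a"
    by (simp_all add: times_unitization_def one_unitization_def scaleC_one)
  show "(a + b) * c = a * c + b * c" "a * (b + c) = a * b + a * c"
    by (simp_all add: times_unitization_def plus_unitization_def scaleC_add_right scaleC_add_left
        distrib_left distrib_right algebra_simps)
  show "a + b + c = a + (b + c)" "a + b = b + a"
    by (simp_all add: plus_unitization_def algebra_simps)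
  show "0 + a = a" by (simp add: plus_unitization_def zero_unitization_def)
  show "- a + a = 0" by (simp add: plus_unitization_def zero_unitization_def uminus_unitization_def)
  show "a - b = a + - b"
    by (simp add: plus_unitization_def minus_unitization_def uminus_unitization_def)
  show "(0::'a unitization) \<noteq> 1" by (simp add: zero_unitization_def one_unitization_def)
qed
end

lemma unitization_eq_iff: "u = v \<longleftrightarrow> scalar_part u = scalar_part v \<and> alg_part u = alg_part v"
  by (cases u; cases v) auto

lemma unitization_parts [simp]:
  "scalar_part 0 = 0" "alg_part 0 = 0" "scalar_part 1 = 1" "alg_part 1 = 0"
  "scalar_part (u + v) = scalar_part u + scalar_part v" "alg_part (u + v) = alg_part u + alg_part v"
  "scalar_part (- u) = - scalar_part u" "alg_part (- u) = - alg_part u"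
  "scalar_part (u - v) = scalar_part u - scalar_part v" "alg_part (u - v) = alg_part u - alg_part v"
  "scalar_part (u * v) = scalar_part u * scalar_part v"
  "alg_part (u * v) = scaleC (scalar_part u) (alg_part v) + scaleC (scalar_part v) (alg_part u)
     + alg_part u * alg_part v"
  by (simp_all add: zero_unitization_def one_unitization_def plus_unitization_def
      uminus_unitization_def minus_unitization_def times_unitization_def)

definition uscale :: "complex \<Rightarrow> 'a::cstar_algebra unitization \<Rightarrow> 'a unitization" where
  "uscale c u = Unitization (c * scalar_part u) (scaleC c (alg_part u))"

lemma uscale_parts [simp]:
  "scalar_part (uscale c u) = c * scalar_part u" "alg_part (uscale c u) = scaleC c (alg_part u)"
  by (simp_all add: uscale_def)

lemma uscale_mult_left: "uscale c u * v = uscale c (u * v)"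
  by (simp add: unitization_eq_iff scaleC_add_right scaleC_scaleC mult_scaleC_left algebra_simps)

lemma uscale_mult_right: "u * uscale c v = uscale c (u * v)"
  by (simp add: unitization_eq_iff scaleC_add_right scaleC_scaleC mult_scaleC_right algebra_simps)

lemma uscale_uscale: "uscale c (uscale d u) = uscale (c * d) u"
  by (simp add: unitization_eq_iff scaleC_scaleC)

lemma uscale_add_right: "uscale c (u + v) = uscale c u + uscale c v"
  by (simp add: unitization_eq_iff scaleC_add_right algebra_simps)

lemma uscale_diff_right: "uscale c (u - v) = uscale c u - uscale c v"
  by (simp add: unitization_eq_iff scaleC_diff_right algebra_simps)

lemma uscale_add_left: "uscale (c + d) u = uscale c u + uscale d u"
  by (simp add: unitization_eq_iff scaleC_add_left algebra_simps)

lemma uscale_diff_left: "uscale (c - d) u = uscale c u - uscale d u"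
  by (simp add: unitization_eq_iff scaleC_diff_left algebra_simps)

lemma uscale_one [simp]: "uscale 1 u = u"
  by (simp add: unitization_eq_iff scaleC_one)

lemma uscale_zero [simp]: "uscale 0 u = 0" "uscale c 0 = 0"
  by (simp_all add: unitization_eq_iff)

lemma uscale_sum_right: "uscale c (sum f A) = (\<Sum>i\<in>A. uscale c (f i))"
  by (induction A rule: infinite_finite_induct) (auto simp: uscale_add_right)

lemma uscale_sum_left: "uscale (sum f A) u = (\<Sum>i\<in>A. uscale (f i) u)"
  by (induction A rule: infinite_finite_induct) (auto simp: uscale_add_left)

lemma uscale_power: "(uscale c u) ^ n = uscale (c ^ n) (u ^ n)"
  by (induction n) (simp_all add: uscale_mult_left uscale_mult_right uscale_uscale mult.commute)

lemma uscale_cancel: "c \<noteq> 0 \<Longrightarrow> uscale c u = 0 \<Longrightarrow> u = 0"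
  using uscale_uscale[of "1/c" c u] by simp

lemma of_nat_unitization: "of_nat n = uscale (of_nat n) 1"
  by (induction n) (simp_all add: unitization_eq_iff algebra_simps)

definition of_alg :: "'a::cstar_algebra \<Rightarrow> 'a unitization" where
  "of_alg x = Unitization 0 x"

lemma of_alg_parts [simp]: "scalar_part (of_alg x) = 0" "alg_part (of_alg x) = x"
  by (simp_all add: of_alg_def)

lemma of_alg_eq_iff [simp]: "of_alg x = of_alg y \<longleftrightarrow> x = y"
  by (simp add: unitization_eq_iff)

lemma of_alg_mult: "of_alg x * of_alg y = of_alg (x * y)"
  by (simp add: unitization_eq_iff)

lemma of_alg_scaleC: "of_alg (scaleC c x) = uscale c (of_alg x)"
  by (simp add: unitization_eq_iff)

lemma of_alg_sum: "of_alg (sum f A) = (\<Sum>i\<in>A. of_alg (f i))"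
  by (induction A rule: infinite_finite_induct) (auto simp: unitization_eq_iff)

lemma of_alg_power: "of_alg x ^ Suc n = of_alg (cpow x n)"
  by (induction n) (simp_all add: of_alg_mult[symmetric])

definition unorm :: "'a::cstar_algebra unitization \<Rightarrow> real" where
  "unorm u = cmod (scalar_part u) + norm (alg_part u)"

lemma unorm_nonneg: "unorm u \<ge> 0"
  by (simp add: unorm_def)

lemma unorm_of_alg [simp]: "unorm (of_alg x) = norm x"
  and unorm_one [simp]: "unorm 1 = 1"
  and unorm_zero [simp]: "unorm 0 = 0"
  by (simp_all add: unorm_def)

lemma unorm_triangle: "unorm (u + v) \<le> unorm u + unorm v"
  unfolding unorm_def
  using norm_triangle_ineq[of "scalar_part u" "scalar_part v"]
    norm_triangle_ineq[of "alg_part u" "alg_part v"]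
  by simp

lemma unorm_triangle_diff: "unorm (u - v) \<le> unorm u + unorm v"
  using unorm_triangle[of u "- v"] by (simp add: unorm_def)

lemma unorm_uscale: "unorm (uscale c u) = cmod c * unorm u"
  by (simp add: unorm_def norm_scaleC norm_mult algebra_simps)

lemma unorm_mult_le: "unorm (u * v) \<le> unorm u * unorm v"
proof -
  have "norm (alg_part (u * v)) \<le> cmod (scalar_part u) * norm (alg_part v)
      + cmod (scalar_part v) * norm (alg_part u) + norm (alg_part u) * norm (alg_part v)"
    by (simp, intro order_trans[OF norm_triangle_ineq] add_mono order_trans[OF norm_triangle_ineq]
        norm_mult_ineq) (simp_all add: norm_scaleC)
  thus ?thesis by (simp add: unorm_def norm_mult algebra_simps)
qed

lemma unorm_mult3_le:
  assumes "unorm u \<le> A" "unorm v \<le> B" "unorm w \<le> C"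
  shows "unorm (u * v * w) \<le> A * B * C"
proof -
  have "unorm (u * v * w) \<le> unorm u * unorm v * unorm w"
    by (meson order_trans unorm_mult_le mult_right_mono unorm_nonneg)
  also have "\<dots> \<le> A * B * C"
  proof -
    have "0 \<le> A" "0 \<le> B" using assms unorm_nonneg order_trans by blast+
    thus ?thesis using assms unorm_nonneg by (intro mult_mono) auto
  qed
  finally show ?thesis .
qed

lemma unorm_sum_le: "unorm (sum f A) \<le> (\<Sum>i\<in>A. unorm (f i))"
  by (induction A rule: infinite_finite_induct) (auto intro: order_trans[OF unorm_triangle])

definition is_uinverse :: "'a::cstar_algebra unitization \<Rightarrow> 'a unitization \<Rightarrow> bool" where
  "is_uinverse u v \<longleftrightarrow> u * v = 1 \<and> v * u = 1"

definition uinvertible :: "'a::cstar_algebra unitization \<Rightarrow> bool" where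
  "uinvertible u \<longleftrightarrow> (\<exists>v. is_uinverse u v)"

lemma is_uinverse_mult: "is_uinverse u v \<Longrightarrow> is_uinverse u' v' \<Longrightarrow> is_uinverse (u * u') (v' * v)"
  unfolding is_uinverse_def by (metis mult.assoc mult_1_left)

lemma uinvertible_one: "uinvertible 1"
  by (auto simp: uinvertible_def is_uinverse_def)

lemma uinvertible_mult: "uinvertible u \<Longrightarrow> uinvertible u' \<Longrightarrow> uinvertible (u * u')"
  unfolding uinvertible_def using is_uinverse_mult by blast

lemma is_uinverse_unique: "is_uinverse u v \<Longrightarrow> is_uinverse u v' \<Longrightarrow> v = v'"
  unfolding is_uinverse_def by (metis mult.assoc mult_1_left mult_1_right)

lemma is_uinverse_commute: "is_uinverse u v \<Longrightarrow> u * w = w * u \<Longrightarrow> v * w = w * v"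
  unfolding is_uinverse_def by (metis mult.assoc mult_1_left mult_1_right)

lemma is_uinverse_uscale: "c \<noteq> 0 \<Longrightarrow> is_uinverse u v \<Longrightarrow> is_uinverse (uscale c u) (uscale (1/c) v)"
  unfolding is_uinverse_def by (simp add: uscale_mult_left uscale_mult_right uscale_uscale)

lemma uinvertible_uscale_iff: "c \<noteq> 0 \<Longrightarrow> uinvertible (uscale c u) \<longleftrightarrow> uinvertible u"
  using is_uinverse_uscale[of c u] is_uinverse_uscale[of "1/c" "uscale c u"]
  unfolding uinvertible_def by (auto simp: uscale_uscale)

lemma is_uinverse_one_minus: "x + y - x * y = 0 \<Longrightarrow> x + y - y * x = 0
    \<Longrightarrow> is_uinverse (1 - of_alg x) (1 - of_alg y)"
  by (simp add: is_uinverse_def unitization_eq_iff scaleC_one algebra_simps)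

lemma quasi_invertible_iff_uinvertible: "quasi_invertible x \<longleftrightarrow> uinvertible (1 - of_alg x)"
proof
  assume "quasi_invertible x"
  thus "uinvertible (1 - of_alg x)"
    unfolding quasi_invertible_def uinvertible_def using is_uinverse_one_minus by blast
next
  assume "uinvertible (1 - of_alg x)"
  then obtain v where v: "(1 - of_alg x) * v = 1" "v * (1 - of_alg x) = 1"
    by (auto simp: uinvertible_def is_uinverse_def)
  have "scalar_part v = 1" using arg_cong[OF v(1), of scalar_part] by simp
  hence "x + (- alg_part v) - x * (- alg_part v) = 0" "x + (- alg_part v) - (- alg_part v) * x = 0"
    using arg_cong[OF v(1), of alg_part] arg_cong[OF v(2), of alg_part]
    by (simp_all add: scaleC_one scaleC_minus_right algebra_simps)
  thus "quasi_invertible x" unfolding quasi_invertible_def by blast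
qed

lemma quasi_inverse_neumann:
  fixes x :: "'a::cstar_algebra"
  assumes "norm x < 1"
  shows "\<exists>y. x + y - x * y = 0 \<and> x + y - y * x = 0 \<and> norm y \<le> norm x / (1 - norm x)"
proof -
  have sg: "summable (\<lambda>n. norm x ^ Suc n)"
    using summable_geometric[of "norm x"] assms summable_mult[of "\<lambda>n. norm x ^ n" "norm x"]
    by simp
  have sn: "summable (\<lambda>n. norm (cpow x n))"
    by (rule summable_comparison_test[OF _ sg]) (use norm_cpow_le[of x] in auto)
  hence s: "summable (\<lambda>n. cpow x n)" by (rule summable_norm_cancel)
  define t where "t = (\<Sum>n. cpow x n)"
  have tail: "(\<Sum>n. cpow x (Suc n)) = t - x"
    using suminf_split_head[OF s] by (simp add: t_def)
  have xt: "x * t = t - x"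
    using suminf_mult[OF s, of x] tail by (simp add: t_def)
  have tx: "t * x = t - x"
    using suminf_mult2[OF s, of x] tail by (simp add: t_def cpow_Suc_right[symmetric])
  have "norm t \<le> (\<Sum>n. norm (cpow x n))" unfolding t_def by (rule summable_norm[OF sn])
  also have "\<dots> \<le> (\<Sum>n. norm x ^ Suc n)"
    by (rule suminf_le[OF _ sn sg]) (rule norm_cpow_le)
  also have "\<dots> = norm x / (1 - norm x)"
    using suminf_mult[OF summable_geometric[of "norm x"], of "norm x"] suminf_geometric[of "norm x"]
      assms
    by simp
  finally show ?thesis
    by (intro exI[of _ "- t"]) (simp add: xt tx)
qed

lemma uinverse_one_minus_half:
  fixes x :: "'a::cstar_algebra"
  assumes "norm x \<le> 1/2"
  shows "\<exists>v. is_uinverse (1 - of_alg x) v \<and> unorm v \<le> 2"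
proof -
  have "norm x < 1" using assms by simp
  then obtain y where y: "x + y - x * y = 0" "x + y - y * x = 0" "norm y \<le> norm x / (1 - norm x)"
    using quasi_inverse_neumann by blast
  have "norm x / (1 - norm x) \<le> 1" using assms by (simp add: field_simps)
  hence "unorm (1 - of_alg y) \<le> 2" using y(3) unorm_triangle_diff[of 1 "of_alg y"] by simp
  thus ?thesis using is_uinverse_one_minus[OF y(1,2)] by blast
qed

lemma not_in_spectrum_iff:
  fixes a :: "'a::cstar_algebra"
  assumes "l \<noteq> 0"
  shows "l \<notin> spectrum a \<longleftrightarrow> uinvertible (uscale l 1 - of_alg a)"
proof -
  have "uscale l 1 - of_alg a = uscale l (1 - of_alg (scaleC (1/l) a))"
    using assms by (simp add: unitization_eq_iff scaleC_diff_right scaleC_scaleC scaleC_one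
        scaleC_minus_right)
  thus ?thesis
    using assms by (simp add: spectrum_def uinvertible_uscale_iff quasi_invertible_iff_uinvertible)
qed

lemma zero_in_spectrum: "0 \<in> spectrum a"
  by (simp add: spectrum_def)

lemma norm_spectrum_le:
  fixes a :: "'a::cstar_algebra"
  assumes "l \<in> spectrum a"
  shows "cmod l \<le> norm a"
proof (rule ccontr)
  assume "\<not> cmod l \<le> norm a"
  hence l: "l \<noteq> 0" "norm a < cmod l" by auto
  hence "norm (scaleC (1/l) a) < 1"
    by (simp add: norm_scaleC norm_divide field_simps)
  hence "quasi_invertible (scaleC (1/l) a)"
    using quasi_inverse_neumann unfolding quasi_invertible_def by blast
  thus False using assms l by (simp add: spectrum_def)
qed

lemma positive_spectrum:
  fixes b :: "'a::cstar_algebra"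
  assumes "positive b" "l \<in> spectrum b"
  shows "\<exists>t. l = of_real t \<and> 0 \<le> t \<and> t \<le> norm b"
  using assms norm_spectrum_le[OF assms(2)] by (auto simp: positive_def)

section \<open>The norm of a self-adjoint element and its spectrum\<close>

lemma geometric_sum_ring: "(1 - w) * (\<Sum>i<n. w ^ i) = 1 - (w::'b::ring_1) ^ n"
proof (induction n)
  case (Suc n)
  have "(1 - w) * (\<Sum>i<Suc n. w ^ i) = (1 - w) * (\<Sum>i<n. w ^ i) + (1 - w) * w ^ n"
    by (simp add: distrib_left)
  also have "\<dots> = (1 - w ^ n) + (w ^ n - w * w ^ n)" using Suc by (simp add: left_diff_distrib)
  finally show ?case by simp
qed simp

lemma power_commute_exponents: "((x::'b::monoid_mult) ^ k) ^ m = (x ^ m) ^ k"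
  by (simp add: power_mult[symmetric] mult.commute)

text \<open>The spectral radius of a self-adjoint element is estimated without complex analysis:
  instead of Cauchy's formula for the resolvent \<open>F \<mu> = (1 - \<mu> z)\<inverse>\<close>, we average \<open>F\<close> over the
  \<open>N\<close>-th roots of unity on the circle \<open>|\<mu>| = R\<close>. The average equals \<open>(1 - (R z)\<^sup>N)\<inverse>\<close>, and the
  resolvent identity shows that it is within \<open>O(1/N)\<close> of the value \<open>F 0 = 1\<close>.\<close>

locale bounded_resolvent =
  fixes F :: "complex \<Rightarrow> 'a::cstar_algebra unitization" and z :: "'a unitization" and R K L :: real
  assumes R_pos: "R > 0"
    and resolvent_inverse: "\<And>\<mu>. cmod \<mu> \<le> R \<Longrightarrow> is_uinverse (1 - uscale \<mu> z) (F \<mu>)"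
    and resolvent_bounded: "\<And>\<mu>. cmod \<mu> \<le> R \<Longrightarrow> unorm (F \<mu>) \<le> K"
    and unorm_z_le: "unorm z \<le> L"
begin

lemma K_nonneg: "K \<ge> 0"
  using resolvent_bounded[of 0] R_pos unorm_nonneg[of "F 0"] by simp

lemma L_nonneg: "L \<ge> 0"
  using unorm_z_le unorm_nonneg[of z] by simp

lemma resolvent_left: "cmod \<mu> \<le> R \<Longrightarrow> F \<mu> * (1 - uscale \<mu> z) = 1"
  and resolvent_right: "cmod \<mu> \<le> R \<Longrightarrow> (1 - uscale \<mu> z) * F \<mu> = 1"
  using resolvent_inverse by (simp_all add: is_uinverse_def)

lemma resolvent_commute: "cmod \<mu> \<le> R \<Longrightarrow> F \<mu> * z = z * F \<mu>"
  by (rule is_uinverse_commute[OF resolvent_inverse])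
     (simp_all add: algebra_simps uscale_mult_left uscale_mult_right)

lemma resolvent_zero: "F 0 = 1"
  using resolvent_left[of 0] R_pos by simp

lemma resolvent_identity:
  assumes "cmod \<mu> \<le> R" "cmod \<nu> \<le> R"
  shows "F \<nu> - F \<mu> = uscale (\<nu> - \<mu>) (z * F \<nu> * F \<mu>)"
proof -
  have "F \<nu> - F \<mu> = F \<nu> * ((1 - uscale \<mu> z) * F \<mu>) - (F \<nu> * (1 - uscale \<nu> z)) * F \<mu>"
    using resolvent_left[OF assms(2)] resolvent_right[OF assms(1)] by simp
  also have "\<dots> = F \<nu> * uscale (\<nu> - \<mu>) z * F \<mu>"
    by (simp add: algebra_simps uscale_diff_left)
  also have "\<dots> = uscale (\<nu> - \<mu>) (z * F \<nu> * F \<mu>)"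
    using resolvent_commute[OF assms(2)] by (simp add: uscale_mult_left uscale_mult_right)
  finally show ?thesis .
qed

lemma resolvent_lipschitz:
  assumes "cmod \<mu> \<le> R" "cmod \<nu> \<le> R"
  shows "unorm (F \<nu> - F \<mu>) \<le> cmod (\<nu> - \<mu>) * (L * K^2)"
proof -
  have "unorm (z * F \<nu> * F \<mu>) \<le> L * K * K"
    using unorm_z_le resolvent_bounded[OF assms(2)] resolvent_bounded[OF assms(1)]
    by (rule unorm_mult3_le)
  thus ?thesis
    using resolvent_identity[OF assms]
    by (simp add: unorm_uscale power2_eq_square mult.assoc mult_left_mono)
qed

end

locale resolvent_average = bounded_resolvent +
  fixes \<omega> :: complex and N :: nat
  assumes N_ge2: "N \<ge> 2" and norm_omega: "cmod \<omega> = 1" and omega_pow_N: "\<omega> ^ N = 1"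
    and omega_primitive: "\<And>m. 0 < m \<Longrightarrow> m < N \<Longrightarrow> \<omega> ^ m \<noteq> 1"
begin

abbreviation F_circ :: "real \<Rightarrow> nat \<Rightarrow> 'a unitization" where
  "F_circ \<rho> k \<equiv> F (of_real \<rho> * \<omega> ^ k)"

definition mean_resolvent :: "real \<Rightarrow> 'a unitization" where
  "mean_resolvent \<rho> = uscale (1 / of_nat N) (\<Sum>k<N. F_circ \<rho> k)"

definition resolvent_moment :: "real \<Rightarrow> 'a unitization" where
  "resolvent_moment \<rho> =
     (\<Sum>k<N. uscale (\<omega> ^ k) (z * F_circ \<rho> k * F_circ \<rho> k))"

lemma omega_ne_1: "\<omega> \<noteq> 1"
  using omega_primitive[of 1] N_ge2 by simp

lemma sum_omega_powers: "(\<Sum>k<N. (\<omega> ^ k) ^ m) = (if m = 0 then of_nat N else 0)" if "m < N"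
proof (cases "m = 0")
  case False
  have "(\<Sum>k<N. (\<omega> ^ k) ^ m) = (\<Sum>k<N. (\<omega> ^ m) ^ k)"
    by (simp add: power_commute_exponents[of \<omega> _ m])
  also have "\<dots> = ((\<omega> ^ m) ^ N - 1) / (\<omega> ^ m - 1)"
    using omega_primitive[of m] False that by (intro geometric_sum) simp
  also have "(\<omega> ^ m) ^ N = 1" by (simp add: power_commute_exponents[of \<omega> m N] omega_pow_N)
  finally show ?thesis using False by simp
qed simp

lemma cmod_on_circle: "cmod (of_real \<rho> * \<omega> ^ k) = \<bar>\<rho>\<bar>"
  by (simp add: norm_mult norm_power norm_omega)

text \<open>Summing the resolvent identity for consecutive points \<open>\<rho> \<omega>\<^sup>k\<close>, \<open>\<rho> \<omega>\<^sup>k\<^sup>+\<^sup>1\<close> around the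
  circle telescopes to zero; this turns the moment into a sum of differences.\<close>
lemma resolvent_moment_telescoped:
  assumes "0 < \<rho>" "\<rho> \<le> R"
  shows "resolvent_moment \<rho>
           = (\<Sum>k<N. uscale (\<omega> ^ k) (z * (F_circ \<rho> k - F_circ \<rho> (Suc k)) * F_circ \<rho> k))"
proof -
  have inR: "cmod (of_real \<rho> * \<omega> ^ k) \<le> R" for k using cmod_on_circle assms by simp
  have step: "F_circ \<rho> (Suc k) - F_circ \<rho> k
      = uscale (of_real \<rho> * (\<omega> - 1)) (uscale (\<omega> ^ k) (z * F_circ \<rho> (Suc k) * F_circ \<rho> k))" for k
  proof -
    have "of_real \<rho> * \<omega> ^ Suc k - of_real \<rho> * \<omega> ^ k = of_real \<rho> * (\<omega> - 1) * \<omega> ^ k"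
      by (simp add: algebra_simps)
    thus ?thesis
      using resolvent_identity[OF inR[of k] inR[of "Suc k"]] by (simp add: uscale_uscale)
  qed
  have "(\<Sum>k<N. F_circ \<rho> (Suc k) - F_circ \<rho> k) = F_circ \<rho> N - F_circ \<rho> 0"
    by (rule sum_lessThan_telescope)
  also have "\<dots> = 0" by (simp add: omega_pow_N)
  finally have "uscale (of_real \<rho> * (\<omega> - 1))
      (\<Sum>k<N. uscale (\<omega> ^ k) (z * F_circ \<rho> (Suc k) * F_circ \<rho> k)) = 0"
    by (simp only: step uscale_sum_right)
  hence "(\<Sum>k<N. uscale (\<omega> ^ k) (z * F_circ \<rho> (Suc k) * F_circ \<rho> k)) = 0"
    by (rule uscale_cancel[rotated]) (use assms omega_ne_1 in simp)
  hence "resolvent_moment \<rho>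
      = resolvent_moment \<rho> - (\<Sum>k<N. uscale (\<omega> ^ k) (z * F_circ \<rho> (Suc k) * F_circ \<rho> k))"
    by simp
  also have "\<dots> = (\<Sum>k<N. uscale (\<omega> ^ k) (z * (F_circ \<rho> k - F_circ \<rho> (Suc k)) * F_circ \<rho> k))"
    unfolding resolvent_moment_def
    by (simp add: sum_subtractf[symmetric] uscale_diff_right[symmetric] algebra_simps)
  finally show ?thesis .
qed

lemma resolvent_moment_bound:
  assumes "0 \<le> \<rho>" "\<rho> \<le> R"
  shows "unorm (resolvent_moment \<rho>) \<le> N * (\<rho> * cmod (\<omega> - 1) * (L^2 * K^3))"
proof (cases "\<rho> = 0")
  case True
  have "resolvent_moment \<rho> = uscale (\<Sum>k<N. \<omega> ^ k) (z * F 0 * F 0)"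
    by (simp add: resolvent_moment_def True uscale_sum_left)
  also have "\<dots> = 0" using sum_omega_powers[of 1] N_ge2 by simp
  finally show ?thesis using K_nonneg L_nonneg True by simp
next
  case False
  have inR: "cmod (of_real \<rho> * \<omega> ^ k) \<le> R" for k using cmod_on_circle assms by simp
  have "unorm (uscale (\<omega> ^ k) (z * (F_circ \<rho> k - F_circ \<rho> (Suc k)) * F_circ \<rho> k))
      \<le> \<rho> * cmod (\<omega> - 1) * (L^2 * K^3)"
    for k
  proof -
    have "of_real \<rho> * \<omega> ^ k - of_real \<rho> * \<omega> ^ Suc k = - (of_real \<rho> * \<omega> ^ k * (\<omega> - 1))"
      by (simp add: algebra_simps)
    hence "cmod (of_real \<rho> * \<omega> ^ k - of_real \<rho> * \<omega> ^ Suc k) = \<rho> * cmod (\<omega> - 1)"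
      using assms by (simp only: norm_minus_cancel norm_mult norm_power norm_omega) simp
    hence "unorm (F_circ \<rho> k - F_circ \<rho> (Suc k)) \<le> \<rho> * cmod (\<omega> - 1) * (L * K ^ 2)"
      using resolvent_lipschitz[OF inR[of "Suc k"] inR[of k]] by simp
    hence "unorm (z * (F_circ \<rho> k - F_circ \<rho> (Suc k)) * F_circ \<rho> k)
        \<le> L * (\<rho> * cmod (\<omega> - 1) * (L * K ^ 2)) * K"
      using unorm_z_le resolvent_bounded[OF inR] by (intro unorm_mult3_le) simp_all
    thus ?thesis
      by (simp add: unorm_uscale norm_power norm_omega power2_eq_square power3_eq_cube
          algebra_simps)
  qed
  hence "unorm (\<Sum>k<N. uscale (\<omega> ^ k) (z * (F_circ \<rho> k - F_circ \<rho> (Suc k)) * F_circ \<rho> k))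
      \<le> (\<Sum>k<N. \<rho> * cmod (\<omega> - 1) * (L^2 * K^3))"
    by (intro order_trans[OF unorm_sum_le] sum_mono)
  thus ?thesis
    using resolvent_moment_telescoped[of \<rho>] False assms by simp
qed


lemma mean_resolvent_diff:
  assumes "0 \<le> \<rho>" "\<rho> \<le> \<rho>'" "\<rho>' \<le> R"
  shows "mean_resolvent \<rho>' - mean_resolvent \<rho> = uscale (of_real (\<rho>' - \<rho>) / of_nat N)
           (resolvent_moment \<rho>
            + (\<Sum>k<N. uscale (\<omega> ^ k) (z * (F_circ \<rho>' k - F_circ \<rho> k) * F_circ \<rho> k)))"
proof -
  have inR: "cmod (of_real \<rho> * \<omega> ^ k) \<le> R" "cmod (of_real \<rho>' * \<omega> ^ k) \<le> R" for k
    using cmod_on_circle assms by simp_all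
  have "F_circ \<rho>' k - F_circ \<rho> k
      = uscale (of_real (\<rho>' - \<rho>)) (uscale (\<omega> ^ k) (z * F_circ \<rho>' k * F_circ \<rho> k))" for k
  proof -
    have "of_real \<rho>' * \<omega> ^ k - of_real \<rho> * \<omega> ^ k = of_real (\<rho>' - \<rho>) * \<omega> ^ k"
      by (simp add: algebra_simps)
    thus ?thesis
      using resolvent_identity[OF inR(1)[of k] inR(2)[of k]] by (simp add: uscale_uscale)
  qed
  hence "mean_resolvent \<rho>' - mean_resolvent \<rho>
      = uscale (1 / of_nat N)
          (uscale (of_real (\<rho>' - \<rho>)) (\<Sum>k<N. uscale (\<omega> ^ k) (z * F_circ \<rho>' k * F_circ \<rho> k)))"
    unfolding mean_resolvent_def
    by (simp add: uscale_diff_right[symmetric] sum_subtractf[symmetric] uscale_sum_right)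
  also have "(\<Sum>k<N. uscale (\<omega> ^ k) (z * F_circ \<rho>' k * F_circ \<rho> k))
      = resolvent_moment \<rho> + (\<Sum>k<N. uscale (\<omega> ^ k) (z * (F_circ \<rho>' k - F_circ \<rho> k) * F_circ \<rho> k))"
    unfolding resolvent_moment_def
    by (simp add: sum.distrib[symmetric] uscale_add_right[symmetric] algebra_simps)
  finally show ?thesis by (simp add: uscale_uscale)
qed

lemma mean_resolvent_step:
  assumes "0 \<le> \<rho>" "\<rho> \<le> \<rho>'" "\<rho>' \<le> R"
  shows "unorm (mean_resolvent \<rho>' - mean_resolvent \<rho>)
           \<le> (\<rho>' - \<rho>) * (\<rho> * cmod (\<omega> - 1) + (\<rho>' - \<rho>)) * (L^2 * K^3)"
proof -
  have inR: "cmod (of_real \<rho> * \<omega> ^ k) \<le> R" "cmod (of_real \<rho>' * \<omega> ^ k) \<le> R" for k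
    using cmod_on_circle assms by simp_all
  have "unorm (uscale (\<omega> ^ k) (z * (F_circ \<rho>' k - F_circ \<rho> k) * F_circ \<rho> k))
      \<le> (\<rho>' - \<rho>) * (L^2 * K^3)" for k
  proof -
    have "of_real \<rho>' * \<omega> ^ k - of_real \<rho> * \<omega> ^ k = of_real (\<rho>' - \<rho>) * \<omega> ^ k"
      by (simp add: algebra_simps)
    hence "cmod (of_real \<rho>' * \<omega> ^ k - of_real \<rho> * \<omega> ^ k) = \<rho>' - \<rho>"
      using assms by (simp add: norm_mult norm_power norm_omega del: of_real_diff)
    hence "unorm (F_circ \<rho>' k - F_circ \<rho> k) \<le> (\<rho>' - \<rho>) * (L * K ^ 2)"
      using resolvent_lipschitz[OF inR(1)[of k] inR(2)[of k]] by simp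
    hence "unorm (z * (F_circ \<rho>' k - F_circ \<rho> k) * F_circ \<rho> k) \<le> L * ((\<rho>' - \<rho>) * (L * K ^ 2)) * K"
      using unorm_z_le resolvent_bounded[OF inR(1)] by (intro unorm_mult3_le) simp_all
    thus ?thesis
      by (simp add: unorm_uscale norm_power norm_omega power2_eq_square power3_eq_cube
          algebra_simps)
  qed
  hence "unorm (\<Sum>k<N. uscale (\<omega> ^ k) (z * (F_circ \<rho>' k - F_circ \<rho> k) * F_circ \<rho> k))
      \<le> (\<Sum>k<N. (\<rho>' - \<rho>) * (L^2 * K^3))"
    by (intro order_trans[OF unorm_sum_le] sum_mono)
  hence "unorm (resolvent_moment \<rho>
        + (\<Sum>k<N. uscale (\<omega> ^ k) (z * (F_circ \<rho>' k - F_circ \<rho> k) * F_circ \<rho> k)))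
      \<le> N * (\<rho> * cmod (\<omega> - 1) * (L^2 * K^3)) + N * ((\<rho>' - \<rho>) * (L^2 * K^3))"
    using assms resolvent_moment_bound[of \<rho>]
    by (intro order_trans[OF unorm_triangle] add_mono) simp_all
  moreover have "cmod (of_real (\<rho>' - \<rho>) / of_nat N) = (\<rho>' - \<rho>) / N"
    using assms by (simp add: norm_divide del: of_real_diff)
  ultimately have "unorm (mean_resolvent \<rho>' - mean_resolvent \<rho>)
      \<le> ((\<rho>' - \<rho>) / N) * (N * (\<rho> * cmod (\<omega> - 1) * (L^2 * K^3)) + N * ((\<rho>' - \<rho>) * (L^2 * K^3)))"
    using assms by (simp only: mean_resolvent_diff unorm_uscale) (intro mult_left_mono, simp_all)
  also have "\<dots> = (\<rho>' - \<rho>) * (\<rho> * cmod (\<omega> - 1) + (\<rho>' - \<rho>)) * (L^2 * K^3)"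
    using N_ge2 by (simp add: field_simps)
  finally show ?thesis .
qed

lemma mean_resolvent_zero: "mean_resolvent 0 = 1"
  using N_ge2 by (simp add: mean_resolvent_def resolvent_zero of_nat_unitization uscale_uscale)

lemma mean_resolvent_near_one:
  assumes "cmod (\<omega> - 1) \<le> 2 * pi / N"
  shows "unorm (mean_resolvent R - 1) \<le> (2 * pi + 1) * R^2 * (L^2 * K^3) / N"
proof -
  define r where "r j = R * real j / real N" for j
  have "(\<Sum>j<N. mean_resolvent (r (Suc j)) - mean_resolvent (r j))
      = mean_resolvent (r N) - mean_resolvent (r 0)"
    by (rule sum_lessThan_telescope)
  hence "mean_resolvent R - 1 = (\<Sum>j<N. mean_resolvent (r (Suc j)) - mean_resolvent (r j))"
    using N_ge2 by (simp add: r_def mean_resolvent_zero)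
  hence "unorm (mean_resolvent R - 1)
      \<le> (\<Sum>j<N. unorm (mean_resolvent (r (Suc j)) - mean_resolvent (r j)))"
    using unorm_sum_le by metis
  also have "\<dots> \<le> (\<Sum>j<N. (R / N) * (R * (2 * pi / N) + R / N) * (L^2 * K^3))"
  proof (rule sum_mono)
    fix j assume j: "j \<in> {..<N}"
    have rs: "r (Suc j) - r j = R / N"
      unfolding r_def by (simp add: diff_divide_distrib[symmetric] algebra_simps)
    have "R * real (Suc j) \<le> R * real N" using j R_pos by (intro mult_left_mono) auto
    hence rj: "0 \<le> r j" "r j \<le> r (Suc j)" "r (Suc j) \<le> R" "r j \<le> R"
      using j R_pos N_ge2 by (auto simp: r_def divide_right_mono pos_divide_le_eq)
    have "unorm (mean_resolvent (r (Suc j)) - mean_resolvent (r j))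
        \<le> (r (Suc j) - r j) * (r j * cmod (\<omega> - 1) + (r (Suc j) - r j)) * (L^2 * K^3)"
      using rj by (intro mean_resolvent_step) auto
    also have "\<dots> \<le> (R / N) * (R * (2 * pi / N) + R / N) * (L^2 * K^3)"
      unfolding rs using rj R_pos assms K_nonneg
      by (intro mult_right_mono mult_left_mono add_mono mult_mono) auto
    finally show "unorm (mean_resolvent (r (Suc j)) - mean_resolvent (r j))
        \<le> (R / N) * (R * (2 * pi / N) + R / N) * (L^2 * K^3)" .
  qed
  also have "\<dots> = (2 * pi + 1) * R^2 * (L^2 * K^3) / N"
    using N_ge2 by (simp add: field_simps power2_eq_square)
  finally show ?thesis .
qed

text \<open>Averaging \<open>(1 - \<omega>\<^sup>k y)\<inverse> = (\<Sum>m<N. \<omega>\<^sup>k\<^sup>m y\<^sup>m) (1 - y\<^sup>N)\<inverse>\<close> over \<open>k\<close> kills every power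
  \<open>y\<^sup>m\<close> with \<open>0 < m < N\<close>.\<close>
lemma mean_resolvent_inverse: "mean_resolvent R * (1 - (uscale (of_real R) z) ^ N) = 1"
proof -
  define y where "y = uscale (of_real R) z"
  have inR: "cmod (of_real R * \<omega> ^ k) \<le> R" for k using cmod_on_circle R_pos by simp
  have fk: "F (of_real R * \<omega> ^ k) * (1 - y ^ N) = (\<Sum>m<N. uscale ((\<omega> ^ k) ^ m) (y ^ m))" for k
  proof -
    define w where "w = uscale (\<omega> ^ k) y"
    have inv: "F (of_real R * \<omega> ^ k) * (1 - w) = 1"
      using resolvent_left[OF inR[of k]] by (simp add: w_def y_def uscale_uscale mult.commute)
    have "w ^ N = y ^ N"
      by (simp add: w_def uscale_power power_commute_exponents[of \<omega> k N] omega_pow_N)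
    hence "F (of_real R * \<omega> ^ k) * (1 - y ^ N) = F (of_real R * \<omega> ^ k) * (1 - w) * (\<Sum>m<N. w ^ m)"
      by (simp only: mult.assoc geometric_sum_ring)
    thus ?thesis by (simp only: inv mult_1_left) (simp add: w_def uscale_power)
  qed
  have "mean_resolvent R * (1 - y ^ N)
      = uscale (1 / of_nat N) (\<Sum>k<N. \<Sum>m<N. uscale ((\<omega> ^ k) ^ m) (y ^ m))"
    by (simp add: mean_resolvent_def uscale_mult_left sum_distrib_right fk)
  also have "(\<Sum>k<N. \<Sum>m<N. uscale ((\<omega> ^ k) ^ m) (y ^ m))
      = (\<Sum>m<N. uscale (if m = 0 then of_nat N else 0) (y ^ m))"
    by (subst sum.swap) (intro sum.cong refl, simp add: uscale_sum_left[symmetric] sum_omega_powers)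
  also have "\<dots> = (\<Sum>m\<in>{0}. uscale (of_nat N) (y ^ m))"
    using N_ge2 by (intro sum.mono_neutral_cong_right) auto
  finally show ?thesis using N_ge2 by (simp add: y_def uscale_uscale)
qed
end

lemma cmod_cis_minus_one_le: "cmod (cis t - 1) \<le> \<bar>t\<bar>"
proof -
  have "(cmod (cis t - 1))^2 = (cos t - 1)^2 + (sin t)^2" by (simp add: cmod_power2)
  also have "\<dots> = 2 - 2 * cos t" by (simp add: power2_eq_square algebra_simps sin_squared_eq)
  also have "\<dots> = (2 * sin (t/2))^2" using cos_double_sin[of "t/2"] by (simp add: power2_eq_square)
  also have "\<dots> \<le> t^2"
  proof -
    have "\<bar>2 * sin (t/2)\<bar> \<le> \<bar>t\<bar>" using abs_sin_x_le_abs_x[of "t/2"] by simp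
    thus ?thesis by (metis abs_le_square_iff)
  qed
  finally have "(cmod (cis t - 1))^2 \<le> \<bar>t\<bar>^2" by simp
  thus ?thesis by (rule power2_le_imp_le) simp
qed

lemma root_of_unity_cis:
  assumes N: "N \<ge> 2"
  defines "\<omega> \<equiv> cis (2 * pi / real N)"
  shows "cmod \<omega> = 1" "\<omega> ^ N = 1" "\<And>m. 0 < m \<Longrightarrow> m < N \<Longrightarrow> \<omega> ^ m \<noteq> 1"
    "cmod (\<omega> - 1) \<le> 2 * pi / N"
proof -
  show "cmod \<omega> = 1" by (simp add: \<omega>_def)
  have "\<omega> ^ N = cis (real N * (2 * pi / real N))" by (simp only: \<omega>_def Complex.DeMoivre)
  thus "\<omega> ^ N = 1" using N by simp
  show "\<omega> ^ m \<noteq> 1" if m: "0 < m" "m < N" for m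
  proof
    assume "\<omega> ^ m = 1"
    hence "cos (2 * pi * m / N) = 1" by (simp add: \<omega>_def Complex.DeMoivre complex_eq_iff mult_ac)
    then obtain k :: int where "2 * pi * m / N = k * 2 * pi" by (auto simp: cos_one_2pi_int)
    hence "real m = k * N" using N by (simp add: field_simps)
    hence "int m = k * int N" by (metis of_int_eq_iff of_int_mult of_int_of_nat_eq)
    moreover have "k \<ge> 1"
    proof (rule ccontr)
      assume "\<not> k \<ge> 1"
      hence "k * int N \<le> 0" by (simp add: mult_nonpos_nonneg)
      thus False using \<open>int m = k * int N\<close> m by simp
    qed
    ultimately have "int m \<ge> int N" using mult_right_mono[of 1 k "int N"] by simp
    thus False using m by simp
  qed
  show "cmod (\<omega> - 1) \<le> 2 * pi / N"
    using cmod_cis_minus_one_le[of "2 * pi / N"] by (simp add: \<omega>_def)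
qed

lemma unorm_lt_one_if_inverse_near_one:
  assumes inv: "S * (1 - Y) = 1" and near: "unorm (S - 1) < 1/2"
  shows "unorm Y < 1"
proof -
  have "Y = (S - 1) * (1 - Y)" using inv by (simp add: algebra_simps)
  hence "unorm Y \<le> unorm (S - 1) * unorm (1 - Y)" using unorm_mult_le by metis
  also have "\<dots> \<le> unorm (S - 1) * (1 + unorm Y)"
    using unorm_triangle_diff[of 1 Y] by (intro mult_left_mono) (simp_all add: unorm_nonneg)
  finally have "unorm Y \<le> unorm (S - 1) + unorm (S - 1) * unorm Y" by (simp add: algebra_simps)
  moreover have "unorm (S - 1) * unorm Y \<le> 1/2 * unorm Y"
    using near unorm_nonneg[of Y] by (intro mult_right_mono) simp_all
  ultimately show ?thesis using near by linarith
qed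

context bounded_resolvent
begin

lemma exists_power_unorm_lt_one: "\<exists>j. unorm ((uscale (of_real R) z) ^ 2 ^ j) < 1"
proof -
  define C where "C = (2 * pi + 1) * R^2 * (L^2 * K^3)"
  have "C \<ge> 0" using K_nonneg by (simp add: C_def)
  obtain j where j: "2 * C + 2 < (2::real) ^ j" using real_arch_pow[of 2 "2 * C + 2"] by auto
  define N :: nat where "N = 2 ^ j"
  have "real N > 2" "C / N < 1/2" using j \<open>C \<ge> 0\<close> by (auto simp: N_def field_simps)
  hence "N \<ge> 2" by linarith
  define \<omega> where "\<omega> = cis (2 * pi / real N)"
  note \<omega> = root_of_unity_cis[OF \<open>N \<ge> 2\<close>, folded \<omega>_def]
  interpret resolvent_average F z R K L \<omega> N
    by (intro resolvent_average.intro bounded_resolvent_axioms resolvent_average_axioms.intro)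
       (use \<omega> \<open>N \<ge> 2\<close> in auto)
  have "unorm (mean_resolvent R - 1) < 1/2"
    using mean_resolvent_near_one[OF \<omega>(4)] \<open>C / N < 1/2\<close> unfolding C_def by linarith
  hence "unorm ((uscale (of_real R) z) ^ N) < 1"
    by (rule unorm_lt_one_if_inverse_near_one[OF mean_resolvent_inverse])
  thus ?thesis by (auto simp: N_def)
qed

end

lemma uinverse_perturb_bound:
  fixes c :: "'a::cstar_algebra"
  assumes i0: "is_uinverse (1 - uscale \<mu>0 (of_alg c)) v0"
    and i1: "is_uinverse (1 - uscale \<mu> (of_alg c)) v"
    and d: "cmod (\<mu> - \<mu>0) * (unorm v0 * norm c) \<le> 1/2"
  shows "unorm v \<le> 2 * unorm v0"
proof -
  define w where "w = uscale (\<mu> - \<mu>0) (v0 * of_alg c)"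
  have wx: "w = of_alg (alg_part w)" by (simp add: unitization_eq_iff w_def)
  have "unorm w \<le> cmod (\<mu> - \<mu>0) * (unorm v0 * norm c)"
    unfolding w_def unorm_uscale using unorm_mult_le[of v0 "of_alg c"] by (simp add: mult_left_mono)
  hence "norm (alg_part w) \<le> 1/2" using d wx by (metis order_trans unorm_of_alg)
  then obtain u where u: "is_uinverse (1 - of_alg (alg_part w)) u" "unorm u \<le> 2"
    using uinverse_one_minus_half by blast
  have "(1 - uscale \<mu>0 (of_alg c)) * w
      = uscale (\<mu> - \<mu>0) (((1 - uscale \<mu>0 (of_alg c)) * v0) * of_alg c)"
    by (simp add: w_def uscale_mult_right mult.assoc)
  also have "\<dots> = uscale (\<mu> - \<mu>0) (of_alg c)" using i0 by (simp add: is_uinverse_def)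
  finally have "(1 - uscale \<mu>0 (of_alg c)) * (1 - w) = 1 - uscale \<mu> (of_alg c)"
    by (simp add: right_diff_distrib uscale_diff_left)
  hence "is_uinverse (1 - uscale \<mu> (of_alg c)) (u * v0)"
    using is_uinverse_mult[OF i0, of "1 - w" u] u(1) wx by simp
  hence "v = u * v0" using is_uinverse_unique i1 by blast
  hence "unorm v \<le> unorm u * unorm v0" using unorm_mult_le by simp
  also have "\<dots> \<le> 2 * unorm v0" using mult_right_mono[OF u(2) unorm_nonneg[of v0]] .
  finally show ?thesis .
qed

lemma uinverse_bounded_on_cball:
  fixes c :: "'a::cstar_algebra"
  assumes inv: "\<And>\<mu>. cmod \<mu> \<le> R \<Longrightarrow> is_uinverse (1 - uscale \<mu> (of_alg c)) (F \<mu>)"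
  shows "\<exists>K. \<forall>\<mu>. cmod \<mu> \<le> R \<longrightarrow> unorm (F \<mu>) \<le> K"
proof -
  define \<delta> where "\<delta> \<mu>0 = 1 / (2 * (unorm (F \<mu>0) * norm c + 1))" for \<mu>0
  have nn: "0 \<le> unorm (F \<mu>0) * norm c" for \<mu>0 by (simp add: unorm_nonneg)
  have \<delta>_pos: "\<delta> \<mu>0 > 0" for \<mu>0 unfolding \<delta>_def using nn[of \<mu>0] by simp
  have local: "unorm (F \<mu>) \<le> 2 * unorm (F \<mu>0)"
    if "cmod \<mu>0 \<le> R" "cmod \<mu> \<le> R" "\<mu> \<in> ball \<mu>0 (\<delta> \<mu>0)" for \<mu> \<mu>0
  proof (rule uinverse_perturb_bound[OF inv[OF that(1)] inv[OF that(2)]])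
    have "cmod (\<mu> - \<mu>0) * (unorm (F \<mu>0) * norm c) \<le> \<delta> \<mu>0 * (unorm (F \<mu>0) * norm c)"
      using that(3) nn by (intro mult_right_mono) (auto simp: dist_norm norm_minus_commute)
    also have "\<dots> \<le> 1/2" unfolding \<delta>_def using nn[of \<mu>0] by (simp add: field_simps)
    finally show "cmod (\<mu> - \<mu>0) * (unorm (F \<mu>0) * norm c) \<le> 1/2" .
  qed
  have "cball 0 R \<subseteq> (\<Union>\<mu>0\<in>cball 0 R. ball \<mu>0 (\<delta> \<mu>0))"
    using \<delta>_pos by force
  then obtain T where T: "T \<subseteq> cball 0 R" "finite T" "cball 0 R \<subseteq> (\<Union>\<mu>0\<in>T. ball \<mu>0 (\<delta> \<mu>0))"
    using compactE_image[OF compact_cball, of "cball 0 R" "\<lambda>\<mu>0. ball \<mu>0 (\<delta> \<mu>0)"] by blast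
  have "unorm (F \<mu>) \<le> (\<Sum>s\<in>T. 2 * unorm (F s))" if \<mu>: "cmod \<mu> \<le> R" for \<mu>
  proof -
    obtain t where t: "t \<in> T" "\<mu> \<in> ball t (\<delta> t)" using T(3) \<mu> by fastforce
    have "unorm (F \<mu>) \<le> 2 * unorm (F t)" using local[of t \<mu>] t T(1) \<mu> by auto
    also have "\<dots> \<le> (\<Sum>s\<in>T. 2 * unorm (F s))"
      using t T(2) unorm_nonneg by (intro member_le_sum) auto
    finally show ?thesis .
  qed
  thus ?thesis by blast
qed

lemma uinvertible_one_minus_uscale:
  fixes c :: "'a::cstar_algebra"
  assumes "\<mu> \<noteq> 0 \<Longrightarrow> 1 / \<mu> \<notin> spectrum c"
  shows "uinvertible (1 - uscale \<mu> (of_alg c))"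
proof (cases "\<mu> = 0")
  case False
  have "1 - uscale \<mu> (of_alg c) = uscale \<mu> (uscale (1 / \<mu>) 1 - of_alg c)"
    using False by (simp add: uscale_diff_right uscale_uscale)
  thus ?thesis
    using assms False not_in_spectrum_iff[of "1 / \<mu>" c] by (simp add: uinvertible_uscale_iff)
qed (simp add: uinvertible_one)

lemma norm_selfadj_le_spectral_bound:
  fixes c :: "'a::cstar_algebra"
  assumes sa: "adj c = c" and spec: "\<And>l. l \<in> spectrum c \<Longrightarrow> cmod l \<le> M"
  shows "norm c \<le> M"
proof (rule dense_ge)
  fix r assume "M < r"
  moreover have "M \<ge> 0" using spec[OF zero_in_spectrum] by simp
  ultimately have r: "r > 0" "M < r" by simp_all
  define R where "R = 1 / r"
  have inv: "uinvertible (1 - uscale \<mu> (of_alg c))" if "cmod \<mu> \<le> R" for \<mu>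
  proof (rule uinvertible_one_minus_uscale)
    assume "\<mu> \<noteq> 0"
    hence "r \<le> cmod (1 / \<mu>)" using that r by (simp add: R_def norm_divide field_simps)
    thus "1 / \<mu> \<notin> spectrum c" using spec r(2) by force
  qed
  define F where "F \<mu> = (SOME v. is_uinverse (1 - uscale \<mu> (of_alg c)) v)" for \<mu>
  have F: "is_uinverse (1 - uscale \<mu> (of_alg c)) (F \<mu>)" if "cmod \<mu> \<le> R" for \<mu>
    using inv[OF that] unfolding F_def uinvertible_def by (rule someI_ex)
  obtain K where "\<And>\<mu>. cmod \<mu> \<le> R \<Longrightarrow> unorm (F \<mu>) \<le> K"
    using uinverse_bounded_on_cball[of R c F] F by blast
  then interpret bounded_resolvent F "of_alg c" R K "norm c"
    using F r by unfold_locales (simp_all add: R_def)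
  obtain j where "unorm ((uscale (of_real R) (of_alg c)) ^ 2 ^ j) < 1"
    using exists_power_unorm_lt_one by blast
  also have "unorm ((uscale (of_real R) (of_alg c)) ^ 2 ^ j) = (R * norm c) ^ 2 ^ j"
    using r norm_cpow_selfadj_pow2[OF sa, of j] of_alg_power[of c "2 ^ j - 1"]
    by (simp add: R_def uscale_power unorm_uscale norm_power norm_divide power_divide
        power_mult_distrib del: of_real_power)
  finally have "R * norm c < 1"
    using power_less_one_iff[of "R * norm c" "2 ^ j"] r by (simp add: R_def)
  thus "norm c \<le> r" using r by (simp add: R_def field_simps)
qed

section \<open>Polynomials in an element\<close>

definition upoly_eval :: "complex poly \<Rightarrow> 'a::cstar_algebra unitization \<Rightarrow> 'a unitization" where
  "upoly_eval p u = (\<Sum>i<Suc (degree p). uscale (coeff p i) (u ^ i))"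

lemma upoly_eval_eq_sum: "degree p < n \<Longrightarrow> upoly_eval p u = (\<Sum>i<n. uscale (coeff p i) (u ^ i))"
  unfolding upoly_eval_def by (rule sum.mono_neutral_left) (auto simp: coeff_eq_0)

lemma upoly_eval_0 [simp]: "upoly_eval 0 u = 0"
  by (simp add: upoly_eval_def)

lemma upoly_eval_const: "upoly_eval [:a:] u = uscale a 1"
  by (simp add: upoly_eval_def)

lemma upoly_eval_add: "upoly_eval (p + q) u = upoly_eval p u + upoly_eval q u"
proof -
  define n where "n = Suc (max (degree p) (degree q))"
  have "degree (p + q) < n" using degree_add_le_max[of p q] by (simp add: n_def)
  thus ?thesis by (simp add: upoly_eval_eq_sum[of _ n] n_def sum.distrib uscale_add_left)
qed

lemma upoly_eval_smult: "upoly_eval (smult a p) u = uscale a (upoly_eval p u)"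
proof -
  have "degree (smult a p) < Suc (degree p)" using degree_smult_le[of a p] by simp
  hence "upoly_eval (smult a p) u = (\<Sum>i<Suc (degree p). uscale (coeff (smult a p) i) (u ^ i))"
    by (rule upoly_eval_eq_sum)
  also have "\<dots> = uscale a (upoly_eval p u)"
    by (simp only: coeff_smult uscale_uscale[symmetric] upoly_eval_def uscale_sum_right)
  finally show ?thesis .
qed

lemma upoly_eval_diff: "upoly_eval (p - q) u = upoly_eval p u - upoly_eval q u"
proof -
  have "p - q = p + smult (-1) q" by simp
  hence "upoly_eval (p - q) u = upoly_eval p u + uscale (-1) (upoly_eval q u)"
    by (simp only: upoly_eval_add upoly_eval_smult)
  thus ?thesis by (simp add: unitization_eq_iff scaleC_minus_left scaleC_one)
qed

lemma upoly_eval_pCons: "upoly_eval (pCons a p) u = uscale a 1 + u * upoly_eval p u"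
proof -
  have "degree (pCons a p) < Suc (Suc (degree p))" using degree_pCons_le[of a p] by simp
  hence "upoly_eval (pCons a p) u = (\<Sum>i<Suc (Suc (degree p)). uscale (coeff (pCons a p) i) (u ^ i))"
    by (rule upoly_eval_eq_sum)
  also have "\<dots> = uscale a 1 + (\<Sum>i<Suc (degree p). uscale (coeff p i) (u ^ Suc i))"
    unfolding sum.lessThan_Suc_shift by simp
  also have "(\<Sum>i<Suc (degree p). uscale (coeff p i) (u ^ Suc i)) = u * upoly_eval p u"
    by (simp only: upoly_eval_def sum_distrib_left uscale_mult_right power_Suc)
  finally show ?thesis .
qed

lemma upoly_eval_mult: "upoly_eval (p * q) u = upoly_eval p u * upoly_eval q u"
proof (induction p rule: pCons_induct)
  case (pCons a p)
  have "upoly_eval (pCons a p * q) u = uscale a (upoly_eval q u) + u * upoly_eval (p * q) u"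
    by (simp add: upoly_eval_add upoly_eval_smult upoly_eval_pCons)
  also have "\<dots> = (uscale a 1 + u * upoly_eval p u) * upoly_eval q u"
    using pCons.IH by (simp add: distrib_right uscale_mult_left mult.assoc)
  finally show ?case by (simp add: upoly_eval_pCons)
qed simp

lemma uinvertible_upoly_eval_prod:
  fixes n :: nat
  shows "(\<And>i. i < n \<Longrightarrow> uinvertible (upoly_eval (f i) u)) \<Longrightarrow> uinvertible (upoly_eval (\<Prod>i<n. f i) u)"
  by (induction n) (simp_all add: upoly_eval_mult upoly_eval_const uinvertible_one uinvertible_mult
      flip: pCons_one)

lemma upoly_eval_of_real_poly:
  fixes q :: "real poly" and b :: "'a::cstar_algebra"
  assumes "poly q 0 = 0"
  shows "upoly_eval (map_poly complex_of_real q) (of_alg b) = of_alg (peval q b)"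
proof -
  have "coeff q 0 = 0" using assms by (simp add: poly_0_coeff_0)
  hence "upoly_eval (map_poly complex_of_real q) (of_alg b)
      = (\<Sum>i<degree q. uscale (of_real (coeff q (Suc i))) (of_alg b ^ Suc i))"
    by (simp add: upoly_eval_def degree_map_poly coeff_map_poly sum.lessThan_Suc_shift
        del: sum.lessThan_Suc power_Suc)
  also have "\<dots> = (\<Sum>i<degree q. of_alg (coeff q (Suc i) *\<^sub>R cpow b i))"
    by (simp only: of_alg_power scaleR_scaleC of_alg_scaleC)
  also have "\<dots> = of_alg (peval q b)"
    by (simp add: peval_def of_alg_sum)
  finally show ?thesis .
qed

lemma poly_map_poly_of_real: "poly (map_poly of_real p) (of_real x) = of_real (poly p x)"
  by (induction p) (auto simp: map_poly_pCons)

lemma map_poly_of_real_diff: "map_poly of_real (p - q) = map_poly of_real p - map_poly of_real q"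
  by (rule poly_eqI) (simp add: coeff_map_poly)

lemma map_poly_of_real_mult: "map_poly of_real (p * q) = map_poly of_real p * map_poly of_real q"
  by (rule poly_eqI) (simp add: coeff_map_poly coeff_mult)

lemma peval_diff:
  fixes b :: "'a::cstar_algebra"
  assumes "poly p 0 = 0" "poly q 0 = 0"
  shows "peval (p - q) b = peval p b - peval q b"
proof -
  have "of_alg (peval (p - q) b)
      = upoly_eval (map_poly of_real p) (of_alg b) - upoly_eval (map_poly of_real q) (of_alg b)"
    using assms
    by (simp add: upoly_eval_of_real_poly[symmetric] map_poly_of_real_diff upoly_eval_diff)
  also have "\<dots> = of_alg (peval p b - peval q b)"
    using assms by (simp add: upoly_eval_of_real_poly unitization_eq_iff)
  finally show ?thesis by simp
qed

lemma peval_mult: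
  fixes b :: "'a::cstar_algebra"
  assumes "poly p 0 = 0" "poly q 0 = 0"
  shows "peval (p * q) b = peval p b * peval q b"
proof -
  have "of_alg (peval (p * q) b) = of_alg (peval p b * peval q b)"
    using assms by (simp add: upoly_eval_of_real_poly[symmetric] map_poly_of_real_mult
        upoly_eval_mult of_alg_mult[symmetric])
  thus ?thesis by simp
qed

lemma peval_id: "peval [:0, 1:] b = b"
  by (simp add: peval_def)

lemma adj_peval: "adj b = b \<Longrightarrow> adj (peval q b) = peval q b"
  by (simp add: peval_def adj_sum adj_scaleR adj_cpow)

text \<open>A weak spectral mapping theorem: a polynomial without zeros on the spectrum of \<open>b\<close> is
  invertible at \<open>b\<close>, by factoring it into linear factors over \<open>\<complex>\<close>.\<close>
lemma uinvertible_upoly_eval: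
  fixes b :: "'a::cstar_algebra"
  assumes "P \<noteq> 0" and no_zero: "\<And>l. l \<in> spectrum b \<Longrightarrow> poly P l \<noteq> 0"
  shows "uinvertible (upoly_eval P (of_alg b))"
proof -
  obtain root where fac: "smult (lead_coeff P) (\<Prod>i<degree P. [:-root i, 1:]) = P"
    using complex_poly_decompose' by blast
  have "uinvertible (upoly_eval [:-root i, 1:] (of_alg b))" if "i < degree P" for i
  proof -
    have "poly P (root i) = 0"
      using that by (subst fac[symmetric]) (auto simp: poly_prod)
    hence "root i \<notin> spectrum b" "root i \<noteq> 0" using no_zero zero_in_spectrum by metis+
    hence "uinvertible (uscale (-1) (uscale (root i) 1 - of_alg b))"
      using not_in_spectrum_iff[of "root i" b] by (simp add: uinvertible_uscale_iff)
    moreover have "uscale (-1) (uscale (root i) 1 - of_alg b) = upoly_eval [:-root i, 1:] (of_alg b)"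
      by (simp add: upoly_eval_pCons upoly_eval_const unitization_eq_iff scaleC_minus_left
          scaleC_one)
    ultimately show ?thesis by simp
  qed
  hence "uinvertible (upoly_eval (\<Prod>i<degree P. [:-root i, 1:]) (of_alg b))"
    by (rule uinvertible_upoly_eval_prod)
  thus ?thesis
    using assms(1) by (subst fac[symmetric]) (simp add: upoly_eval_smult uinvertible_uscale_iff)
qed

lemma norm_peval_le:
  fixes b :: "'a::cstar_algebra" and q :: "real poly"
  assumes pos: "positive b" and q0: "poly q 0 = 0"
    and bound: "\<And>t. 0 \<le> t \<Longrightarrow> t \<le> norm b \<Longrightarrow> \<bar>poly q t\<bar> \<le> M"
  shows "norm (peval q b) \<le> M"
proof (rule norm_selfadj_le_spectral_bound)
  show "adj (peval q b) = peval q b" using pos by (simp add: adj_peval positive_def)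
  have "M \<ge> 0" using bound[of 0] q0 by simp
  fix l assume l: "l \<in> spectrum (peval q b)"
  show "cmod l \<le> M"
  proof (rule ccontr)
    assume "\<not> cmod l \<le> M"
    hence "M < cmod l" "l \<noteq> 0" using \<open>M \<ge> 0\<close> by auto
    define P where "P = [:l:] - map_poly complex_of_real q"
    have "poly P 0 \<noteq> 0" using \<open>l \<noteq> 0\<close> q0 by (simp add: P_def poly_0_coeff_0 coeff_map_poly)
    moreover have "poly P t \<noteq> 0" if t: "t \<in> spectrum b" for t
    proof -
      obtain s where "t = of_real s" "0 \<le> s" "s \<le> norm b" using positive_spectrum[OF pos t] by blast
      thus ?thesis
        using bound[of s] \<open>M < cmod l\<close> by (auto simp: P_def poly_map_poly_of_real)
    qed
    ultimately have "uinvertible (upoly_eval P (of_alg b))"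
      by (intro uinvertible_upoly_eval) auto
    moreover have "upoly_eval P (of_alg b) = uscale l 1 - of_alg (peval q b)"
      using q0 by (simp add: P_def upoly_eval_const upoly_eval_diff upoly_eval_of_real_poly)
    ultimately show False
      using l not_in_spectrum_iff[OF \<open>l \<noteq> 0\<close>, of "peval q b"] by simp
  qed
qed

section \<open>The continuous functional calculus\<close>

lemma real_polynomial_function_imp_poly:
  assumes "real_polynomial_function g"
  shows "\<exists>p. \<forall>x. g x = poly p x"
  using assms
proof (induction rule: real_polynomial_function.induct)
  case (linear f)
  have "f x = poly [:0, f 1:] x" for x
    using linear_scale_real[OF bounded_linear.linear[OF linear], of x 1] by simp
  thus ?case by blast
next
  case (const c)
  have "c = poly [:c:] x" for x by simp
  thus ?case by blast
next
  case (add f g)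
  then obtain p q where "\<forall>x. f x = poly p x" "\<forall>x. g x = poly q x" by blast
  hence "\<forall>x. f x + g x = poly (p + q) x" by simp
  thus ?case by blast
next
  case (mult f g)
  then obtain p q where "\<forall>x. f x = poly p x" "\<forall>x. g x = poly q x" by blast
  hence "\<forall>x. f x * g x = poly (p * q) x" by simp
  thus ?case by blast
qed

definition poly_approx :: "real \<Rightarrow> (real \<Rightarrow> real) \<Rightarrow> (nat \<Rightarrow> real poly) \<Rightarrow> bool" where
  "poly_approx B f p \<longleftrightarrow>
     (\<forall>n. poly (p n) 0 = 0) \<and> uniform_limit {0..B} (\<lambda>n x. poly (p n) x) f sequentially"

text \<open>Weierstrass approximation, corrected by the constant term so that \<open>p 0 = 0\<close>.\<close>
lemma Weierstrass_vanishing_at_zero: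
  fixes f :: "real \<Rightarrow> real"
  assumes f: "continuous_on {0..B} f" and f0: "f 0 = 0" and B: "B \<ge> 0" and e: "e > 0"
  shows "\<exists>p. poly p 0 = 0 \<and> (\<forall>x\<in>{0..B}. \<bar>f x - poly p x\<bar> < e)"
proof -
  obtain g where g: "real_polynomial_function g" "\<And>x. x \<in> {0..B} \<Longrightarrow> \<bar>f x - g x\<bar> < e / 2"
    using Stone_Weierstrass_real_polynomial_function[OF compact_Icc f, of "e / 2"] e by auto
  obtain r where r: "\<forall>x. g x = poly r x" using real_polynomial_function_imp_poly[OF g(1)] by blast
  have "\<bar>poly r 0\<bar> < e / 2" using g(2)[of 0] B r f0 by simp
  moreover have "\<bar>f x - poly (r - [:poly r 0:]) x\<bar> \<le> \<bar>f x - poly r x\<bar> + \<bar>poly r 0\<bar>" for x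
    using abs_triangle_ineq[of "f x - poly r x" "poly r 0"] by (simp add: algebra_simps)
  moreover have "\<bar>f x - poly r x\<bar> < e / 2" if "x \<in> {0..B}" for x
    using g(2)[OF that] r by simp
  ultimately have "\<bar>f x - poly (r - [:poly r 0:]) x\<bar> < e" if "x \<in> {0..B}" for x
    using that by (smt (verit, best) field_sum_of_halves)
  thus ?thesis by (intro exI[of _ "r - [:poly r 0:]"]) simp
qed

lemma poly_approx_exists:
  fixes f :: "real \<Rightarrow> real"
  assumes f: "continuous_on {0..B} f" and f0: "f 0 = 0" and B: "B \<ge> 0"
  shows "\<exists>p. poly_approx B f p"
proof -
  have "\<forall>n. \<exists>q. poly q 0 = 0 \<and> (\<forall>x\<in>{0..B}. \<bar>f x - poly q x\<bar> < 1 / Suc n)"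
    using Weierstrass_vanishing_at_zero[OF f f0 B] by simp
  then obtain p where p: "\<And>n. poly (p n) 0 = 0"
    "\<And>n x. x \<in> {0..B} \<Longrightarrow> \<bar>f x - poly (p n) x\<bar> < 1 / Suc n"
    by metis
  have "uniform_limit {0..B} (\<lambda>n x. poly (p n) x) f sequentially"
  proof (rule uniform_limitI)
    fix e :: real assume "e > 0"
    then obtain N where N: "N > 0" "inverse (real N) < e" using ex_inverse_of_nat_less by blast
    have "\<forall>x\<in>{0..B}. dist (poly (p n) x) (f x) < e" if "n \<ge> N" for n
    proof
      fix x assume "x \<in> {0..B}"
      moreover have "1 / real (Suc n) \<le> inverse (real N)"
        using that N(1) by (simp add: field_simps)
      ultimately show "dist (poly (p n) x) (f x) < e"
        using p(2)[of x n] N by (simp add: dist_real_def abs_minus_commute)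
    qed
    thus "\<forall>\<^sub>F n in sequentially. \<forall>x\<in>{0..B}. dist (poly (p n) x) (f x) < e"
      using eventually_sequentially by blast
  qed
  thus ?thesis using p(1) by (auto simp: poly_approx_def)
qed

context
  fixes b :: "'a::cstar_algebra"
  assumes pos: "positive b"
begin

lemma peval_poly_approx_close:
  assumes p: "poly_approx (norm b) f p" and p': "poly_approx (norm b) g p'" and e: "e > 0"
    and fg: "\<forall>x\<in>{0..norm b}. \<bar>f x - g x\<bar> \<le> d"
  shows "\<exists>N. \<forall>m\<ge>N. \<forall>n\<ge>N. norm (peval (p m) b - peval (p' n) b) \<le> d + e"
proof -
  have "\<forall>\<^sub>F n in sequentially. \<forall>x\<in>{0..norm b}. dist (poly (p n) x) (f x) < e/2"
    using p e unfolding poly_approx_def by (intro uniform_limitD) auto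
  moreover have "\<forall>\<^sub>F n in sequentially. \<forall>x\<in>{0..norm b}. dist (poly (p' n) x) (g x) < e/2"
    using p' e unfolding poly_approx_def by (intro uniform_limitD) auto
  ultimately obtain N where N: "\<And>n x. n \<ge> N \<Longrightarrow> x \<in> {0..norm b} \<Longrightarrow>
      \<bar>poly (p n) x - f x\<bar> < e/2 \<and> \<bar>poly (p' n) x - g x\<bar> < e/2"
    unfolding eventually_sequentially dist_real_def by (metis max.bounded_iff nle_le)
  have "norm (peval (p m) b - peval (p' n) b) \<le> d + e" if "m \<ge> N" "n \<ge> N" for m n
  proof -
    have z: "poly (p m) 0 = 0" "poly (p' n) 0 = 0" using p p' by (auto simp: poly_approx_def)
    have "norm (peval (p m - p' n) b) \<le> d + e"
    proof (rule norm_peval_le[OF pos])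
      show "poly (p m - p' n) 0 = 0" using z by simp
      fix t assume "0 \<le> t" "t \<le> norm b"
      hence "\<bar>poly (p m) t - f t\<bar> < e/2" "\<bar>poly (p' n) t - g t\<bar> < e/2" "\<bar>f t - g t\<bar> \<le> d"
        using N[OF that(1), of t] N[OF that(2), of t] fg by auto
      thus "\<bar>poly (p m - p' n) t\<bar> \<le> d + e" by (simp only: poly_diff; linarith)
    qed
    thus ?thesis using z by (simp add: peval_diff)
  qed
  thus ?thesis by blast
qed

lemma tendsto_fcalc:
  assumes p: "poly_approx (norm b) f p"
  shows "(\<lambda>n. peval (p n) b) \<longlonglongrightarrow> fcalc f b"
proof -
  have same_limit: "(\<lambda>n. peval (p' n) b) \<longlonglongrightarrow> L"
    if p': "poly_approx (norm b) f p'" and L: "(\<lambda>n. peval (p n) b) \<longlonglongrightarrow> L" for p' L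
  proof -
    have "(\<lambda>n. peval (p n) b - peval (p' n) b) \<longlonglongrightarrow> 0"
    proof (rule LIMSEQ_I)
      fix r :: real assume "r > 0"
      then obtain N where "\<forall>n\<ge>N. norm (peval (p n) b - peval (p' n) b) \<le> 0 + r/2"
        using peval_poly_approx_close[OF p p', of "r/2" 0] by auto
      thus "\<exists>N. \<forall>n\<ge>N. norm (peval (p n) b - peval (p' n) b - 0) < r" using \<open>r > 0\<close> by force
    qed
    from tendsto_diff[OF L this] show ?thesis by simp
  qed
  have "Cauchy (\<lambda>n. peval (p n) b)"
  proof (rule CauchyI)
    fix e :: real assume "e > 0"
    then obtain N where "\<forall>m\<ge>N. \<forall>n\<ge>N. norm (peval (p m) b - peval (p n) b) \<le> 0 + e/2"
      using peval_poly_approx_close[OF p p, of "e/2" 0] by auto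
    thus "\<exists>N. \<forall>m\<ge>N. \<forall>n\<ge>N. norm (peval (p m) b - peval (p n) b) < e" using \<open>e > 0\<close> by force
  qed
  then obtain L where L: "(\<lambda>n. peval (p n) b) \<longlonglongrightarrow> L"
    by (auto simp: Cauchy_convergent_iff convergent_def)
  have "fcalc f b = L"
    unfolding fcalc_def
  proof (rule the_equality)
    show "\<forall>p'. (\<forall>n. poly (p' n) 0 = 0)
          \<and> uniform_limit {0..norm b} (\<lambda>n x. poly (p' n) x) f sequentially
        \<longrightarrow> (\<lambda>n. peval (p' n) b) \<longlonglongrightarrow> L"
      using same_limit[OF _ L] unfolding poly_approx_def by blast
  qed (use p L LIMSEQ_unique in \<open>auto simp: poly_approx_def\<close>)
  thus ?thesis using L by simp
qed


lemma norm_fcalc_le: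
  assumes f: "continuous_on {0..norm b} f" and f0: "f 0 = 0"
    and M: "\<And>t. 0 \<le> t \<Longrightarrow> t \<le> norm b \<Longrightarrow> \<bar>f t\<bar> \<le> M"
  shows "norm (fcalc f b) \<le> M"
proof (rule field_le_epsilon)
  fix e :: real assume e: "e > 0"
  obtain p where p: "poly_approx (norm b) f p" using poly_approx_exists[OF f f0] by auto
  have 0: "poly_approx (norm b) (\<lambda>x. 0) (\<lambda>n. 0)"
    by (simp add: poly_approx_def uniform_limit_const)
  have "\<forall>x\<in>{0..norm b}. \<bar>f x - 0\<bar> \<le> M" using M by auto
  then obtain N where "\<forall>m\<ge>N. \<forall>n\<ge>N. norm (peval (p m) b - peval 0 b) \<le> M + e"
    using peval_poly_approx_close[OF p 0 e] by blast
  hence "eventually (\<lambda>n. norm (peval (p n) b) \<le> M + e) sequentially"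
    by (auto simp: eventually_sequentially peval_def)
  thus "norm (fcalc f b) \<le> M + e"
    by (intro tendsto_upperbound[OF tendsto_norm[OF tendsto_fcalc[OF p]]]) auto
qed

lemma fcalc_cong:
  assumes f: "continuous_on {0..norm b} f" and f0: "f 0 = 0"
    and fg: "\<And>t. 0 \<le> t \<Longrightarrow> t \<le> norm b \<Longrightarrow> f t = g t"
  shows "fcalc f b = fcalc g b"
proof -
  obtain p where p: "poly_approx (norm b) f p" using poly_approx_exists[OF f f0] by auto
  hence "poly_approx (norm b) g p"
    using fg unfolding poly_approx_def by (subst (asm) uniform_limit_cong'[of _ _ _ _ g]) auto
  thus ?thesis using tendsto_fcalc[OF p] tendsto_fcalc LIMSEQ_unique by blast
qed

lemma fcalc_mult:
  assumes f: "continuous_on {0..norm b} f" and f0: "f 0 = 0"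
    and g: "continuous_on {0..norm b} g" and g0: "g 0 = 0"
  shows "fcalc (\<lambda>t. f t * g t) b = fcalc f b * fcalc g b"
proof -
  obtain p where p: "poly_approx (norm b) f p" using poly_approx_exists[OF f f0] by auto
  obtain r where r: "poly_approx (norm b) g r" using poly_approx_exists[OF g g0] by auto
  have "bounded (f ` {0..norm b})" "bounded (g ` {0..norm b})"
    using f g by (auto intro: compact_imp_bounded compact_continuous_image)
  hence "uniform_limit {0..norm b} (\<lambda>n x. poly (p n) x * poly (r n) x) (\<lambda>t. f t * g t) sequentially"
    using p r unfolding poly_approx_def by (intro uniform_lim_mult) auto
  hence pr: "poly_approx (norm b) (\<lambda>t. f t * g t) (\<lambda>n. p n * r n)"
    using p r by (simp add: poly_approx_def)
  have "(\<lambda>n. peval (p n * r n) b) \<longlonglongrightarrow> fcalc f b * fcalc g b"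
    using tendsto_mult[OF tendsto_fcalc[OF p] tendsto_fcalc[OF r]] p r
    by (simp add: poly_approx_def peval_mult)
  thus ?thesis using tendsto_fcalc[OF pr] LIMSEQ_unique by blast
qed

lemma fcalc_id: "fcalc (\<lambda>t. t) b = b"
proof -
  have "poly_approx (norm b) (\<lambda>t. t) (\<lambda>n. [:0, 1:])"
    by (simp add: poly_approx_def uniform_limit_const)
  from tendsto_fcalc[OF this] show ?thesis by (simp add: peval_id LIMSEQ_const_iff)
qed

lemma adj_fcalc:
  assumes f: "continuous_on {0..norm b} f" and f0: "f 0 = 0"
  shows "adj (fcalc f b) = fcalc f b"
proof -
  obtain p where p: "poly_approx (norm b) f p" using poly_approx_exists[OF f f0] by auto
  have "adj (peval (p n) b) = peval (p n) b" for n
    using pos by (simp add: adj_peval positive_def)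
  thus ?thesis
    using tendsto_adj[OF tendsto_fcalc[OF p]] tendsto_fcalc[OF p] LIMSEQ_unique by auto
qed

lemma fcalc_compression:
  assumes f: "continuous_on {0..norm b} f" "f 0 = 0"
    and m: "continuous_on {0..norm b} m" "m 0 = 0"
    and r: "continuous_on {0..norm b} r" "r 0 = 0"
    and sq: "\<And>t. 0 \<le> t \<Longrightarrow> t \<le> norm b \<Longrightarrow> m t * m t = f t"
    and fac: "\<And>t. 0 \<le> t \<Longrightarrow> t \<le> norm b \<Longrightarrow> (r t * m t) * t * (r t * m t) = f t"
    and r_bound: "\<And>t. 0 \<le> t \<Longrightarrow> t \<le> norm b \<Longrightarrow> \<bar>r t\<bar> \<le> K"
  shows "\<exists>z. adj z * b * z = adj x * fcalc f b * x
           \<and> norm z ^ 2 \<le> K^2 * norm (adj x * fcalc f b * x)"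
proof -
  define g where "g = (\<lambda>t. r t * m t)"
  have g: "continuous_on {0..norm b} g" "g 0 = 0"
    using r m by (auto simp: g_def intro: continuous_on_mult)
  have gt: "continuous_on {0..norm b} (\<lambda>t. g t * t)"
    by (intro continuous_intros g)
  have gfac: "fcalc g b = fcalc r b * fcalc m b"
    using fcalc_mult[OF r m] by (simp add: g_def)
  have mm: "fcalc m b * fcalc m b = fcalc f b"
    using fcalc_mult[OF m m] fcalc_cong[OF continuous_on_mult[OF m(1) m(1)]] sq m(2) by simp
  have "fcalc g b * b * fcalc g b = fcalc (\<lambda>t. g t * t * g t) b"
    using fcalc_mult[OF g, of "\<lambda>t. t"] fcalc_mult[OF gt _ g] fcalc_id by simp
  also have "\<dots> = fcalc f b"
  proof (rule fcalc_cong)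
    show "continuous_on {0..norm b} (\<lambda>t. g t * t * g t)" by (rule continuous_on_mult[OF gt g(1)])
    show "g 0 * 0 * g 0 = 0" by simp
    show "g t * t * g t = f t" if "0 \<le> t" "t \<le> norm b" for t using fac[OF that] by (simp add: g_def)
  qed
  finally have gbg: "fcalc g b * b * fcalc g b = fcalc f b" .
  note bound = cstar_compression_bound[OF adj_fcalc[OF g] adj_fcalc[OF m] gbg mm gfac, of x]
  have "norm (fcalc r b) ^ 2 \<le> K ^ 2"
    using norm_fcalc_le[OF r r_bound] by (intro power_mono) simp_all
  hence "norm (fcalc g b * x) ^ 2 \<le> K ^ 2 * norm (adj x * fcalc f b * x)"
    using bound(2) by (meson mult_right_mono norm_ge_zero order_trans)
  thus ?thesis using bound(1) by blast
qed
end

section \<open>Compressing \<open>b\<close> below the Cuntz hypothesis\<close>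

definition ramp :: "real \<Rightarrow> real \<Rightarrow> real \<Rightarrow> real" where
  "ramp c e t = max 0 (min 1 ((t - c) / e))"

definition inv_sqrt_clip :: "real \<Rightarrow> real \<Rightarrow> real" where
  "inv_sqrt_clip d t = t / (max t d * sqrt (max t d))"

lemma continuous_on_ramp: "e \<noteq> 0 \<Longrightarrow> continuous_on S (ramp c e)"
  unfolding ramp_def by (intro continuous_intros) auto

lemma ramp_bounds: "0 \<le> ramp c e t" "ramp c e t \<le> 1"
  by (simp_all add: ramp_def)

lemma ramp_eq_0: "e > 0 \<Longrightarrow> t \<le> c \<Longrightarrow> ramp c e t = 0"
  by (simp add: ramp_def divide_nonpos_pos)

lemma ramp_end: "e > 0 \<Longrightarrow> ramp c e (c + e) = 1"
  by (simp add: ramp_def)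

lemma continuous_on_inv_sqrt_clip: "d > 0 \<Longrightarrow> continuous_on S (inv_sqrt_clip d)"
  unfolding inv_sqrt_clip_def by (intro continuous_intros) (auto simp: max_def)

lemma inv_sqrt_clip_0 [simp]: "inv_sqrt_clip d 0 = 0"
  by (simp add: inv_sqrt_clip_def)

lemma abs_inv_sqrt_clip_le:
  assumes "d > 0" "t \<ge> 0"
  shows "\<bar>inv_sqrt_clip d t\<bar> \<le> 1 / sqrt d"
proof (cases "t \<le> d")
  case True
  hence "inv_sqrt_clip d t = t / (d * sqrt d)" by (simp add: inv_sqrt_clip_def max_def)
  also have "\<dots> \<le> d / (d * sqrt d)" using True assms by (intro divide_right_mono) auto
  finally show ?thesis using assms by (simp add: inv_sqrt_clip_def)
next
  case False
  hence "inv_sqrt_clip d t = 1 / sqrt t" by (simp add: inv_sqrt_clip_def max_def field_simps)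
  thus ?thesis using False assms by (simp add: divide_left_mono)
qed

text \<open>Where the ramp is nonzero, \<open>t > d\<close> and \<open>inv_sqrt_clip d t = 1 / sqrt t\<close>; elsewhere
  \<open>inv_sqrt_clip d\<close> only serves to stay continuous and bounded by \<open>1 / sqrt d\<close>.\<close>
lemma inv_sqrt_clip_ramp_factor:
  assumes "0 < d" "d \<le> c" "e > 0" "t \<ge> 0"
  shows "(inv_sqrt_clip d t * sqrt (ramp c e t)) * t * (inv_sqrt_clip d t * sqrt (ramp c e t))
           = ramp c e t"
proof (cases "t \<le> c")
  case False
  hence "inv_sqrt_clip d t = 1 / sqrt t" "t > 0"
    using assms by (auto simp: inv_sqrt_clip_def max_def field_simps)
  hence "inv_sqrt_clip d t * inv_sqrt_clip d t * t = 1" by (simp flip: real_sqrt_mult)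
  moreover have "sqrt (ramp c e t) * sqrt (ramp c e t) = ramp c e t" using ramp_bounds by simp
  ultimately show ?thesis by (metis mult.assoc mult.left_commute mult_1)
qed (simp add: ramp_eq_0 assms)

lemma cuntz_approximant_norm_bound:
  fixes a b :: "'a::cstar_algebra"
  assumes pos: "positive b"
    and H: "\<forall>f :: real \<Rightarrow> real. continuous_on {0..norm b} f \<and> f ` {0..norm b} \<subseteq> {0..1}
           \<and> f 0 = 0 \<and> f (norm b) \<noteq> 0 \<longrightarrow> cuntz_below a (fcalc f b)"
    and d: "0 < d" "d < norm b" and \<delta>: "\<delta> > 0"
  shows "\<exists>z. norm (adj z * b * z - a) < \<delta> \<and> norm z ^ 2 * d \<le> norm (adj z * b * z)"
proof -
  define e where "e = (norm b - d) / 2"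
  define f where "f = ramp (d + e) e"
  have e: "e > 0" "d + e + e = norm b" using d by (simp_all add: e_def)
  have f: "continuous_on {0..norm b} f" "f 0 = 0"
    using e d by (simp_all add: f_def continuous_on_ramp ramp_eq_0)
  have "f ` {0..norm b} \<subseteq> {0..1}" "f (norm b) \<noteq> 0"
    using ramp_bounds ramp_end[OF e(1), of "d + e"] e(2) by (auto simp: f_def)
  hence "cuntz_below a (fcalc f b)" using H f by blast
  then obtain x where x: "norm (adj x * fcalc f b * x - a) < \<delta>"
    unfolding cuntz_below_def using LIMSEQ_D[OF _ \<delta>] by blast
  obtain z where z: "adj z * b * z = adj x * fcalc f b * x"
    "norm z ^ 2 \<le> (1 / sqrt d) ^ 2 * norm (adj x * fcalc f b * x)"
  proof (rule exE[OF fcalc_compression[OF pos f _ _ continuous_on_inv_sqrt_clip[OF d(1)]]])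
    show "continuous_on {0..norm b} (\<lambda>t. sqrt (f t))" by (intro continuous_intros f)
    show "sqrt (f t) * sqrt (f t) = f t" for t using ramp_bounds by (simp add: f_def)
    show "(inv_sqrt_clip d t * sqrt (f t)) * t * (inv_sqrt_clip d t * sqrt (f t)) = f t"
      if "0 \<le> t" for t
      using inv_sqrt_clip_ramp_factor[of d "d + e" e t] e d that by (simp add: f_def)
    show "\<bar>inv_sqrt_clip d t\<bar> \<le> 1 / sqrt d" if "0 \<le> t" for t
      using abs_inv_sqrt_clip_le d that by simp
  qed (use f in auto)
  hence "norm z ^ 2 * d \<le> norm (adj z * b * z)" using d by (simp add: power_divide field_simps)
  thus ?thesis using x z(1) by (intro exI[of _ z]) simp
qed

lemma tendsto_norm_of_compression_lower_bound:
  fixes z :: "nat \<Rightarrow> 'a::cstar_algebra"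
  assumes lim: "(\<lambda>n. adj (z n) * b * z n) \<longlonglongrightarrow> a" and "b \<noteq> 0"
    and lower: "\<And>n. norm (z n) ^ 2 * d n \<le> norm (adj (z n) * b * z n)"
    and d: "d \<longlonglongrightarrow> norm b" "\<And>n. d n > 0"
  shows "(\<lambda>n. norm (z n)) \<longlonglongrightarrow> sqrt (norm a / norm b)"
proof -
  define w where "w n = adj (z n) * b * z n" for n
  have upper: "norm (w n) \<le> norm b * norm (z n) ^ 2" for n
  proof -
    have "norm (w n) \<le> norm (adj (z n) * b) * norm (z n)" by (simp add: w_def norm_mult_ineq)
    also have "\<dots> \<le> (norm (z n) * norm b) * norm (z n)"
      using norm_mult_ineq[of "adj (z n)" b] by (intro mult_right_mono) auto
    finally show ?thesis by (simp add: power2_eq_square algebra_simps)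
  qed
  have "(\<lambda>n. norm (z n) ^ 2) \<longlonglongrightarrow> norm a / norm b"
  proof (rule tendsto_sandwich)
    show "\<forall>\<^sub>F n in sequentially. norm (w n) / norm b \<le> norm (z n) ^ 2"
      using upper \<open>b \<noteq> 0\<close> by (simp add: field_simps mult.commute)
    show "\<forall>\<^sub>F n in sequentially. norm (z n) ^ 2 \<le> norm (w n) / d n"
      using lower d(2) by (simp add: w_def field_simps)
    show "(\<lambda>n. norm (w n) / norm b) \<longlonglongrightarrow> norm a / norm b"
      "(\<lambda>n. norm (w n) / d n) \<longlonglongrightarrow> norm a / norm b"
      using lim d(1) \<open>b \<noteq> 0\<close> unfolding w_def by (auto intro!: tendsto_intros)
  qed
  from tendsto_real_sqrt[OF this] show ?thesis by simp
qed

text \<open>Rescaling to the exact norm \<open>s\<close>; the factor tends to \<open>1\<close>. The arbitrary value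
  \<open>(s / \<parallel>b\<parallel>) b\<close> is only used at the finitely many indices where \<open>z n = 0\<close>.\<close>
lemma exists_constant_norm_compression:
  fixes z :: "nat \<Rightarrow> 'a::cstar_algebra"
  assumes lim: "(\<lambda>n. adj (z n) * b * z n) \<longlonglongrightarrow> a" and "b \<noteq> 0"
    and norm_lim: "(\<lambda>n. norm (z n)) \<longlonglongrightarrow> s" and "s > 0"
  shows "\<exists>Z. (\<lambda>n. adj (Z n) * b * Z n) \<longlonglongrightarrow> a \<and> (\<forall>n. norm (Z n) = s)"
proof -
  define Z where "Z n = (if z n = 0 then (s / norm b) *\<^sub>R b else (s / norm (z n)) *\<^sub>R z n)" for n
  have "norm (Z n) = s" for n
    using \<open>s > 0\<close> \<open>b \<noteq> 0\<close> by (simp add: Z_def)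
  moreover have "\<forall>\<^sub>F n in sequentially. z n \<noteq> 0"
    using order_tendstoD(1)[OF norm_lim \<open>s > 0\<close>] by (rule eventually_mono) auto
  hence "\<forall>\<^sub>F n in sequentially.
      (s / norm (z n)) ^ 2 *\<^sub>R (adj (z n) * b * z n) = adj (Z n) * b * Z n"
    by (rule eventually_mono) (simp add: Z_def adj_scaleR power2_eq_square)
  moreover have "(\<lambda>n. (s / norm (z n)) ^ 2 *\<^sub>R (adj (z n) * b * z n)) \<longlonglongrightarrow> (s / s) ^ 2 *\<^sub>R a"
    using \<open>s > 0\<close> by (intro tendsto_intros norm_lim lim) auto
  ultimately show ?thesis
    using \<open>s > 0\<close> Lim_transform_eventually by fastforce
qed

theorem lemma3p2:
  fixes a b :: "'a::cstar_algebra"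
  assumes "positive a" and "positive b" and "b \<noteq> 0"
    and "\<forall>f :: real \<Rightarrow> real. continuous_on {0..norm b} f \<and> f ` {0..norm b} \<subseteq> {0..1}
           \<and> f 0 = 0 \<and> f (norm b) \<noteq> 0 \<longrightarrow> cuntz_below a (fcalc f b)"
  shows "\<exists>z :: nat \<Rightarrow> 'a. (\<lambda>n. adj (z n) * b * z n) \<longlonglongrightarrow> a
           \<and> (\<forall>n. norm (z n) = sqrt (norm a / norm b))"
proof (cases "a = 0")
  case True
  thus ?thesis by (intro exI[of _ "\<lambda>n. 0"]) simp
next
  case False
  define d where "d n = norm b - norm b / real (n + 2)" for n
  have "d \<longlonglongrightarrow> norm b - 0"
    unfolding d_def
    by (intro tendsto_diff tendsto_const LIMSEQ_ignore_initial_segment lim_const_over_n)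
  moreover have "0 < d n" "d n < norm b" for n
    using \<open>b \<noteq> 0\<close> by (simp_all add: d_def field_simps add_pos_nonneg)
  ultimately have d: "d \<longlonglongrightarrow> norm b" "\<And>n. 0 < d n" "\<And>n. d n < norm b" by simp_all
  have "\<forall>n. \<exists>z. norm (adj z * b * z - a) < 1 / real (Suc n)
      \<and> norm z ^ 2 * d n \<le> norm (adj z * b * z)"
    using cuntz_approximant_norm_bound[OF assms(2,4) d(2,3)] by simp
  then obtain z where z: "\<And>n. norm (adj (z n) * b * z n - a) < 1 / real (Suc n)"
    "\<And>n. norm (z n) ^ 2 * d n \<le> norm (adj (z n) * b * z n)"
    by metis
  have lim: "(\<lambda>n. adj (z n) * b * z n) \<longlonglongrightarrow> a"
    using LIMSEQ_norm_0[OF z(1)] by (rule LIM_zero_cancel)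
  show ?thesis
    using \<open>a \<noteq> 0\<close> \<open>b \<noteq> 0\<close>
    by (intro exists_constant_norm_compression[OF lim \<open>b \<noteq> 0\<close>]
        tendsto_norm_of_compression_lower_bound[OF lim \<open>b \<noteq> 0\<close> z(2) d(1,2)]) simp
qed

end
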